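(* Let $d\ge1$, $\lambda>0$, and let $f_0:\mathbb{R}^d\to[0,\infty)$ be a probability density satisfying: (i) $f_0$ is continuous and $\lim_{\|x\|\to\infty}f_0(x)=0$; (ii) there are constants $C,\bar\epsilon>0$ with $\int_{\{x:|f_0(x)-\lambda|\le\epsilon\}}f_0(x)\,dx\le C\epsilon$ for all $\epsilon\in(0,\bar\epsilon)$; (iii) for any $\lambda_l<\lambda_h$ in $[\lambda-\bar\epsilon,\lambda+\bar\epsilon]$ and $x,y\in S_{\lambda_h}$: if $x,y$ lie in different connected components of $S_{\lambda_h}$ then they lie in different connected components of $S_{\lambda_l}$, and if $x,y$ lie in the same connected component of $S_{\lambda_l}$ then they lie in the same connected component of $S_{\lambda_h}$. Suppose further that $f_0$ is $\alpha$-H\"older continuous for some $\alpha\in(0,1]$, that $\mathcal{X}_n=\{x_1,\dots,x_n\}$ are drawn independently from $f_0$ with $n\ge16$, and that $D=\binom n2^{-1}L$ where $L$ is the Inactive/Active Binder loss with constants $0<a\le1$, $0<m\le1$, $a\le 2m$. Then there are finite constants $C_0,\bar\delta,\bar\gamma>0$, depending on $f_0$ (and $\lambda$), such that with probability at least $1-\frac{1+n}{n^2}$, $$\sup_{f:\|f-f_0\|_\infty\le\gamma} D\{\tilde\psi_{\lambda,\delta}(f),\psi_\lambda(f_0)\}\le C_0\Big\{\max(\gamma,\delta^\alpha)+\sqrt{\tfrac{\ln n}{n}}\Big\}$$ holds simultaneously for all $\delta\in[r_{n,\lambda,d},\bar\delta)$ and all $\gamma\in(0,\bar\gamma)$, where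 $r_{n,\lambda,d}=2\big(\frac{16\,d\ln n}{\lambda v_d n}\big)^{1/d}$ and $v_d$ is the volume of the unit Euclidean ball in $\mathbb{R}^d$.
   Context: $S_t=\{x\in\mathbb{R}^d:f_0(x)\ge t\}$ denotes the level-$t$ set of $f_0$; connectivity refers to topological connected components. A sub-partition of $\mathcal{X}_n$ is a collection of non-empty pairwise disjoint subsets of $\mathcal{X}_n$ (union possibly proper); its active set is the union, the rest are inactive points, and its allocation vector $c$ has $c_i=h$ if $x_i\in C_h$, $c_i=0$ if $x_i$ inactive. The level-$\lambda$ clustering $\psi_\lambda(f_0)$ is the sub-partition of $\mathcal{X}_n$ consisting of the non-empty sets $W\cap\mathcal{X}_n$ where $W$ ranges over the connected components of $S_\lambda$. For a function $f:\mathbb{R}^d\to\mathbb{R}$ and $\delta>0$, the surrogate clustering $\tilde\psi_{\lambda,\delta}(f)$ is the sub-partition of $\mathcal{X}_n$ given by the graph-theoretic connected components of the graph with vertex set $A_{f,\lambda}=\{x\in\mathcal{X}_n:f(x)\ge\lambda\}$ and edges $\{(x,y):\|x-y\|<\delta\}$. The Inactive/Active Binder loss between sub-partitions $\mathbf{C},\mathbf{C}'$ with active sets $A,A'$, inactive sets $I,I'$ and allocation vectors $c,c'$ is $L(\mathbf{C},\mathbf{C}')=(n-1)m(|A\cap I'|+|I\cap A'|)+\sum_{i<j,\,x_i,x_j\in A\cap A'}a[\mathbf 1(c_i=c_j,c'_i\ne c'_j)+\mathbf 1(c_i\ne c_j,c'_i=c'_j)]$. *)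

theory Defs
  imports "HOL-Probability.Probability"
begin

text \<open>Sub-partitions are represented on the index set {..<n} of the sample
  X 0, ..., X (n-1): a sub-partition is a set of nonempty, pairwise disjoint
  subsets of {..<n}.\<close>

definition level_set :: "('a \<Rightarrow> real) \<Rightarrow> real \<Rightarrow> 'a set" where
  "level_set f t = {x. f x \<ge> t}"

definition level_clustering ::
  "('a::topological_space \<Rightarrow> real) \<Rightarrow> real \<Rightarrow> (nat \<Rightarrow> 'a) \<Rightarrow> nat \<Rightarrow> nat set set" where
  "level_clustering f0 lam X n =
     {{i. i < n \<and> X i \<in> W} | W. W \<in> components (level_set f0 lam)} - {{}}"

definition surr_edges ::
  "('a::metric_space \<Rightarrow> real) \<Rightarrow> real \<Rightarrow> real \<Rightarrow> (nat \<Rightarrow> 'a) \<Rightarrow> nat \<Rightarrow> (nat \<times> nat) set" where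
  "surr_edges f lam delta X n =
     {(i, j). i < n \<and> j < n \<and> f (X i) \<ge> lam \<and> f (X j) \<ge> lam \<and> dist (X i) (X j) < delta}"

definition surrogate_clustering ::
  "('a::metric_space \<Rightarrow> real) \<Rightarrow> real \<Rightarrow> real \<Rightarrow> (nat \<Rightarrow> 'a) \<Rightarrow> nat \<Rightarrow> nat set set" where
  "surrogate_clustering f lam delta X n =
     {{j. (i, j) \<in> (surr_edges f lam delta X n)\<^sup>*} | i. i < n \<and> f (X i) \<ge> lam}"

definition active :: "nat set set \<Rightarrow> nat set" where
  "active C = \<Union>C"

definition inactive :: "nat \<Rightarrow> nat set set \<Rightarrow> nat set" where
  "inactive n C = {..<n} - active C"

definition same_cluster :: "nat set set \<Rightarrow> nat \<Rightarrow> nat \<Rightarrow> bool" where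
  "same_cluster C i j \<longleftrightarrow> (\<exists>B\<in>C. i \<in> B \<and> j \<in> B)"

definition binder_loss ::
  "real \<Rightarrow> real \<Rightarrow> nat \<Rightarrow> nat set set \<Rightarrow> nat set set \<Rightarrow> real" where
  "binder_loss a m n C C' =
     (real n - 1) * m * real (card (active C \<inter> inactive n C') + card (inactive n C \<inter> active C'))
     + (\<Sum>(i, j) \<in> {(i, j). i < j \<and> i \<in> active C \<inter> active C' \<and> j \<in> active C \<inter> active C'}.
          a * ((if same_cluster C i j \<and> \<not> same_cluster C' i j then 1 else 0)
             + (if \<not> same_cluster C i j \<and> same_cluster C' i j then 1 else 0)))"

definition binder_D ::
  "real \<Rightarrow> real \<Rightarrow> nat \<Rightarrow> nat set set \<Rightarrow> nat set set \<Rightarrow> real" where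
  "binder_D a m n C C' = binder_loss a m n C C' / real (n choose 2)"

text \<open>Probability of the i.i.d. sample of size n from density f0 is the product
  measure; the event holds "with probability at least p" if it contains a
  measurable set of probability at least p.\<close>
definition sample_space :: "('a::euclidean_space \<Rightarrow> real) \<Rightarrow> nat \<Rightarrow> (nat \<Rightarrow> 'a) measure" where
  "sample_space f0 n = PiM {..<n} (\<lambda>_. density lborel (\<lambda>x. ennreal (f0 x)))"

definition holds_with_prob_at_least ::
  "'b measure \<Rightarrow> ('b \<Rightarrow> bool) \<Rightarrow> real \<Rightarrow> bool" where
  "holds_with_prob_at_least M P p \<longleftrightarrow>
     (\<exists>E\<in>sets M. E \<subseteq> {\<omega>\<in>space M. P \<omega>} \<and> measure M E \<ge> p)"

definition holder_continuous :: "real \<Rightarrow> ('a::metric_space \<Rightarrow> real) \<Rightarrow> bool" where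
  "holder_continuous \<alpha> f \<longleftrightarrow> (\<exists>H. \<forall>x y. \<bar>f x - f y\<bar> \<le> H * dist x y powr \<alpha>)"

definition r_rate :: "nat \<Rightarrow> real \<Rightarrow> nat \<Rightarrow> real \<Rightarrow> real" where
  "r_rate n lam d vd = 2 * (16 * real d * ln (real n) / (lam * vd * real n)) powr (1 / real d)"

end

theory Submission
  imports Defs
begin

text \<open>Suppose the sample is a \<open>\<rho>\<close>-cover of \<open>S\<^sub>\<lambda>\<close> with \<open>2\<rho> < \<delta>\<close>, and put
  \<open>\<kappa> = \<gamma> + H \<delta>\<^sup>\<alpha>\<close>. Off the margin \<open>{|f\<^sub>0 - \<lambda>| \<le> \<kappa>}\<close> the two clusterings agree: a path of
  the \<open>\<delta>\<close>-graph stays, by Hoelder continuity along its edges, inside \<open>S\<^sub>\<lambda>\<^sub>-\<^sub>\<kappa>\<close>, a path inside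
  \<open>S\<^sub>\<lambda>\<^sub>+\<^sub>\<kappa>\<close> is shadowed by the \<open>\<delta>\<close>-graph, and condition (iii) transports connectivity
  between the levels \<open>\<lambda> - \<kappa>\<close>, \<open>\<lambda>\<close> and \<open>\<lambda> + \<kappa>\<close>. So the loss is at most \<open>3n\<close> times the
  number of sample points in the margin. With probability \<open>1 - 1/n\<^sup>2\<close> the sample covers a net of
  \<open>S\<^sub>\<lambda>\<close> (a packing bound at the scale \<open>r\<^sub>n\<^sub>,\<^sub>\<lambda>\<^sub>,\<^sub>d\<close>), and Hoeffding's inequality on a grid of
  margin widths together with (ii) bounds the margin count by \<open>n (C\<kappa> + 2 \<surd>(ln n / n)) + O(1)\<close>
  for all \<open>\<kappa>\<close> at once. The finitely many \<open>n\<close> for which \<open>r\<^sub>n\<^sub>,\<^sub>\<lambda>\<^sub>,\<^sub>d\<close> is not yet small are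
  absorbed into \<open>C\<^sub>0\<close>, since always \<open>D \<le> 7\<close>.\<close>

section \<open>Binder loss\<close>

lemma card_activity_mismatch_le:
  assumes "active C \<subseteq> {..<n}" "active C' \<subseteq> {..<n}"
    and "\<And>i. i \<in> G \<Longrightarrow> i < n \<Longrightarrow> i \<in> active C \<longleftrightarrow> i \<in> active C'"
  shows "card (active C \<inter> inactive n C') + card (inactive n C \<inter> active C') \<le> card ({..<n} - G)"
proof -
  have "card (active C \<inter> inactive n C') + card (inactive n C \<inter> active C')
      = card (active C \<inter> inactive n C' \<union> inactive n C \<inter> active C')"
    by (rule card_Un_disjoint[symmetric]) (auto simp: inactive_def)
  also have "\<dots> \<le> card ({..<n} - G)"
    using assms by (intro card_mono) (auto simp: inactive_def)
  finally show ?thesis .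
qed

lemma binder_loss_le_card_disagreement:
  assumes active: "active C \<subseteq> {..<n}" "active C' \<subseteq> {..<n}"
    and agree_active: "\<And>i. i \<in> G \<Longrightarrow> i < n \<Longrightarrow> i \<in> active C \<longleftrightarrow> i \<in> active C'"
    and agree_cluster: "\<And>i j. i \<in> G \<Longrightarrow> j \<in> G \<Longrightarrow> i \<in> active C \<Longrightarrow> j \<in> active C \<Longrightarrow>
        same_cluster C i j \<longleftrightarrow> same_cluster C' i j"
    and a: "0 \<le> a" "a \<le> 1" and m: "0 \<le> m" "m \<le> 1"
  shows "binder_loss a m n C C' \<le> 3 * real n * real (card ({..<n} - G))"
proof -
  define B where "B = {..<n} - G"
  define Pairs where
    "Pairs = {(i, j). i < j \<and> i \<in> active C \<inter> active C' \<and> j \<in> active C \<inter> active C'}"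
  define disagree where
    "disagree = (\<lambda>(i, j). a * ((if same_cluster C i j \<and> \<not> same_cluster C' i j then 1 else 0)
       + (if \<not> same_cluster C i j \<and> same_cluster C' i j then 1 else 0)) :: real)"
  have mismatch: "(real n - 1) * m * real (card (active C \<inter> inactive n C') + card (inactive n C \<inter> active C'))
      \<le> real n * real (card B)"
  proof -
    have "(real n - 1) * m \<le> real n"
      using m by (cases "n = 0") (auto intro: order_trans[OF mult_right_le_one_le])
    then have "(real n - 1) * m * real (card (active C \<inter> inactive n C') + card (inactive n C \<inter> active C'))
        \<le> real n * real (card (active C \<inter> inactive n C') + card (inactive n C \<inter> active C'))"
      by (rule mult_right_mono) simp
    also have "\<dots> \<le> real n * real (card B)"
      using card_activity_mismatch_le[of C n C' G, OF active agree_active]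
      by (intro mult_left_mono) (simp_all add: B_def)
    finally show ?thesis .
  qed
  have pairs_sub: "Pairs \<subseteq> {..<n} \<times> {..<n}"
    using active by (auto simp: Pairs_def)
  have "disagree p \<le> (if fst p \<in> B \<or> snd p \<in> B then 1 else 0)" if "p \<in> Pairs" for p
  proof (cases "fst p \<in> B \<or> snd p \<in> B")
    case False
    with that active have "fst p \<in> G" "snd p \<in> G" "fst p \<in> active C" "snd p \<in> active C"
      by (auto simp: Pairs_def B_def)
    then show ?thesis
      using agree_cluster by (simp add: disagree_def case_prod_beta)
  qed (use a in \<open>auto simp: disagree_def case_prod_beta\<close>)
  then have "(\<Sum>p\<in>Pairs. disagree p) \<le> (\<Sum>p\<in>Pairs. if fst p \<in> B \<or> snd p \<in> B then 1 else 0)"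
    by (rule sum_mono)
  also have "\<dots> = real (card {p\<in>Pairs. fst p \<in> B \<or> snd p \<in> B})"
    using finite_subset[OF pairs_sub] by (simp add: sum.If_cases Int_def)
  also have "card {p\<in>Pairs. fst p \<in> B \<or> snd p \<in> B} \<le> card (B \<times> {..<n} \<union> {..<n} \<times> B)"
    using pairs_sub by (intro card_mono) (auto simp: B_def)
  also have "\<dots> \<le> card (B \<times> {..<n}) + card ({..<n} \<times> B)"
    by (rule card_Un_le)
  also have "\<dots> = 2 * n * card B"
    by (simp add: card_cartesian_product)
  finally have "(\<Sum>p\<in>Pairs. disagree p) \<le> 2 * real n * real (card B)"
    by simp
  moreover have "binder_loss a m n C C' = (real n - 1) * m
      * real (card (active C \<inter> inactive n C') + card (inactive n C \<inter> active C')) + (\<Sum>p\<in>Pairs. disagree p)"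
    unfolding binder_loss_def Pairs_def disagree_def by simp
  ultimately show ?thesis
    using mismatch by (simp add: B_def)
qed

lemma real_choose_two: "real (n choose 2) = real n * (real n - 1) / 2"
proof (cases n)
  case (Suc k)
  have "even (n * k)"
    using Suc by simp
  then show ?thesis
    using Suc by (auto simp: choose_two real_of_nat_div algebra_simps)
qed simp

lemma binder_D_le_of_binder_loss_le:
  assumes "binder_loss a m n C C' \<le> 3 * real n * real k" and "n \<ge> 2"
  shows "binder_D a m n C C' \<le> 6 * real k / (real n - 1)"
proof -
  have pos: "real (n choose 2) > 0"
    using assms(2) by (simp add: real_choose_two)
  have "binder_D a m n C C' \<le> 3 * real n * real k / real (n choose 2)"
    unfolding binder_D_def using pos assms(1) by (simp add: divide_right_mono)
  also have "\<dots> = 6 * real k / (real n - 1)"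
    using assms(2) by (simp add: real_choose_two field_simps)
  finally show ?thesis .
qed

lemma binder_D_le_seven:
  assumes "active C \<subseteq> {..<n}" "active C' \<subseteq> {..<n}"
    and "0 \<le> a" "a \<le> 1" "0 \<le> m" "m \<le> 1" "n \<ge> 7"
  shows "binder_D a m n C C' \<le> 7"
proof -
  have "binder_loss a m n C C' \<le> 3 * real n * real (card ({..<n} - {}))"
    by (rule binder_loss_le_card_disagreement) (use assms in auto)
  then have "binder_D a m n C C' \<le> 6 * real n / (real n - 1)"
    using binder_D_le_of_binder_loss_le[of a m n C C' n] assms by simp
  also have "\<dots> \<le> 7"
    using assms by (simp add: field_simps)
  finally show ?thesis .
qed

section \<open>Surrogate and level-set clusterings\<close>

lemma sym_surr_edges: "sym (surr_edges f lam \<delta> X n)"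
  by (auto simp: surr_edges_def dist_commute intro: symI)

lemma surr_edges_rtrancl_active:
  assumes "(i, j) \<in> (surr_edges f lam \<delta> X n)\<^sup>*" "i < n" "f (X i) \<ge> lam"
  shows "j < n \<and> f (X j) \<ge> lam"
  using assms by (induction rule: rtrancl_induct) (auto simp: surr_edges_def)

lemma active_surrogate_clustering:
  "active (surrogate_clustering f lam \<delta> X n) = {i. i < n \<and> f (X i) \<ge> lam}"
proof (intro set_eqI iffI)
  fix j
  assume "j \<in> active (surrogate_clustering f lam \<delta> X n)"
  then obtain i where "i < n" "f (X i) \<ge> lam" "(i, j) \<in> (surr_edges f lam \<delta> X n)\<^sup>*"
    unfolding active_def surrogate_clustering_def by auto
  then show "j \<in> {i. i < n \<and> f (X i) \<ge> lam}"
    using surr_edges_rtrancl_active by blast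
next
  fix i
  assume "i \<in> {i. i < n \<and> f (X i) \<ge> lam}"
  then show "i \<in> active (surrogate_clustering f lam \<delta> X n)"
    unfolding active_def surrogate_clustering_def
    by (intro UnionI[of "{j. (i, j) \<in> (surr_edges f lam \<delta> X n)\<^sup>*}"]) auto
qed

lemma same_cluster_surrogate_clustering_iff:
  assumes "i < n" "f (X i) \<ge> lam"
  shows "same_cluster (surrogate_clustering f lam \<delta> X n) i j
    \<longleftrightarrow> (i, j) \<in> (surr_edges f lam \<delta> X n)\<^sup>*"
proof
  assume "same_cluster (surrogate_clustering f lam \<delta> X n) i j"
  then obtain k where "(k, i) \<in> (surr_edges f lam \<delta> X n)\<^sup>*" "(k, j) \<in> (surr_edges f lam \<delta> X n)\<^sup>*"
    unfolding same_cluster_def surrogate_clustering_def by auto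
  then show "(i, j) \<in> (surr_edges f lam \<delta> X n)\<^sup>*"
    using sym_rtrancl[OF sym_surr_edges] by (meson rtrancl_trans symD)
next
  assume "(i, j) \<in> (surr_edges f lam \<delta> X n)\<^sup>*"
  then show "same_cluster (surrogate_clustering f lam \<delta> X n) i j"
    unfolding same_cluster_def surrogate_clustering_def using assms
    by (intro bexI[of _ "{k. (i, k) \<in> (surr_edges f lam \<delta> X n)\<^sup>*}"]) auto
qed

lemma active_level_clustering:
  "active (level_clustering f0 lam X n) = {i. i < n \<and> X i \<in> level_set f0 lam}"
proof (intro set_eqI iffI)
  fix i
  assume "i \<in> active (level_clustering f0 lam X n)"
  then obtain W where "W \<in> components (level_set f0 lam)" "i < n" "X i \<in> W"
    unfolding active_def level_clustering_def by auto
  then show "i \<in> {i. i < n \<and> X i \<in> level_set f0 lam}"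
    using in_components_subset by auto
next
  fix i
  assume i: "i \<in> {i. i < n \<and> X i \<in> level_set f0 lam}"
  let ?W = "connected_component_set (level_set f0 lam) (X i)"
  have "?W \<in> components (level_set f0 lam)" "X i \<in> ?W"
    using i by (simp_all add: componentsI connected_component_refl)
  then show "i \<in> active (level_clustering f0 lam X n)"
    unfolding active_def level_clustering_def using i
    by (intro UnionI[of "{k. k < n \<and> X k \<in> ?W}"]) auto
qed

lemma same_cluster_level_clustering_iff:
  assumes "X i \<in> level_set f0 lam" "i < n"
  shows "same_cluster (level_clustering f0 lam X n) i j
    \<longleftrightarrow> j < n \<and> connected_component (level_set f0 lam) (X i) (X j)"
proof
  assume "same_cluster (level_clustering f0 lam X n) i j"
  then obtain W where W: "W \<in> components (level_set f0 lam)" "X i \<in> W" "X j \<in> W" "j < n"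
    unfolding same_cluster_def level_clustering_def by auto
  then obtain x where "W = connected_component_set (level_set f0 lam) x"
    by (auto simp: components_def)
  with W show "j < n \<and> connected_component (level_set f0 lam) (X i) (X j)"
    using connected_component_sym connected_component_trans by (metis mem_Collect_eq)
next
  assume j: "j < n \<and> connected_component (level_set f0 lam) (X i) (X j)"
  let ?W = "connected_component_set (level_set f0 lam) (X i)"
  have "?W \<in> components (level_set f0 lam)" "X i \<in> ?W" "X j \<in> ?W"
    using assms j by (simp_all add: componentsI connected_component_refl)
  then show "same_cluster (level_clustering f0 lam X n) i j"
    unfolding same_cluster_def level_clustering_def using assms j
    by (intro bexI[of _ "{k. k < n \<and> X k \<in> ?W}"]) auto
qed

section \<open>Hoelder continuity and connectivity\<close>

lemma holder_lower_bound:
  assumes holder: "\<And>x y. \<bar>f x - f y\<bar> \<le> H * dist x y powr \<alpha>" and "H \<ge> 0" "\<alpha> > 0"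
    and "dist x y \<le> r"
  shows "f y \<ge> f x - H * r powr \<alpha>"
proof -
  have "H * dist x y powr \<alpha> \<le> H * r powr \<alpha>"
    using assms by (intro mult_left_mono powr_mono2) auto
  with holder[of x y] show ?thesis
    by linarith
qed

text \<open>Each edge of the graph is a segment of length below \<open>\<delta>\<close> from a point where
  \<open>f0 \<ge> lam - \<gamma>\<close>, so by Hoelder continuity the whole segment lies in the lower level set.\<close>

lemma connected_component_of_surr_path:
  fixes f0 f :: "'a::euclidean_space \<Rightarrow> real"
  assumes holder: "\<And>x y. \<bar>f0 x - f0 y\<bar> \<le> H * dist x y powr \<alpha>" and H: "H \<ge> 0" and \<alpha>: "\<alpha> > 0"
    and approx: "\<And>x. \<bar>f x - f0 x\<bar> \<le> \<gamma>"
    and path: "(i, j) \<in> (surr_edges f lam \<delta> X n)\<^sup>*" and i: "f (X i) \<ge> lam"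
  shows "connected_component (level_set f0 (lam - \<gamma> - H * \<delta> powr \<alpha>)) (X i) (X j)"
  using path
proof (induction rule: rtrancl_induct)
  case base
  have "H * \<delta> powr \<alpha> \<ge> 0"
    using H by simp
  then show ?case
    using approx[of "X i"] i by (simp add: level_set_def)
next
  case (step k l)
  then have kl: "f (X k) \<ge> lam" "dist (X k) (X l) < \<delta>"
    by (auto simp: surr_edges_def)
  have "closed_segment (X k) (X l) \<subseteq> level_set f0 (lam - \<gamma> - H * \<delta> powr \<alpha>)"
  proof
    fix z
    assume "z \<in> closed_segment (X k) (X l)"
    then have "dist (X k) z \<le> \<delta>"
      using kl dist_in_closed_segment[of z "X k" "X l"] by (simp add: dist_commute)
    then have "f0 z \<ge> f0 (X k) - H * \<delta> powr \<alpha>"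
      by (rule holder_lower_bound[OF holder H \<alpha>])
    then show "z \<in> level_set f0 (lam - \<gamma> - H * \<delta> powr \<alpha>)"
      using approx[of "X k"] kl by (simp add: level_set_def)
  qed
  then have "connected_component (level_set f0 (lam - \<gamma> - H * \<delta> powr \<alpha>)) (X k) (X l)"
    unfolding connected_component_def by (intro exI[of _ "closed_segment (X k) (X l)"]) auto
  with step.IH show ?case
    using connected_component_trans by blast
qed

text \<open>The property "within \<open>\<rho>\<close> of a sample point reachable from \<open>i\<close>" is locally constant on
  the component (sample points near two points at distance below \<open>\<delta> - 2\<rho>\<close> are adjacent),
  hence constant by connectedness.\<close>

lemma surr_path_of_connected_component:
  fixes f0 f :: "'a::metric_space \<Rightarrow> real"
  assumes holder: "\<And>x y. \<bar>f0 x - f0 y\<bar> \<le> H * dist x y powr \<alpha>" and H: "H \<ge> 0" and \<alpha>: "\<alpha> > 0"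
    and approx: "\<And>x. \<bar>f x - f0 x\<bar> \<le> \<gamma>" and \<gamma>: "\<gamma> \<ge> 0"
    and \<rho>: "0 < \<rho>" "2 * \<rho> < \<delta>"
    and cover: "\<forall>q\<in>level_set f0 lam. \<exists>k<n. dist q (X k) < \<rho>"
    and ij: "i < n" "j < n"
    and cc: "connected_component (level_set f0 (lam + \<gamma> + H * \<delta> powr \<alpha>)) (X i) (X j)"
  shows "(i, j) \<in> (surr_edges f lam \<delta> X n)\<^sup>*"
proof -
  let ?E = "surr_edges f lam \<delta> X n"
  define Q where "Q = connected_component_set (level_set f0 (lam + \<gamma> + H * \<delta> powr \<alpha>)) (X i)"
  have XQ: "X i \<in> Q" "X j \<in> Q"
    using cc by (auto simp: Q_def connected_component_in connected_component_refl)
  have slack: "H * \<delta> powr \<alpha> \<ge> 0"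
    using H by simp
  have high: "f0 q \<ge> lam + \<gamma> + H * \<delta> powr \<alpha>" if "q \<in> Q" for q
    using that connected_component_subset by (fastforce simp: Q_def level_set_def)
  have active: "f (X k) \<ge> lam" if "q \<in> Q" "dist q (X k) < \<rho>" for q k
  proof -
    have "dist q (X k) \<le> \<delta>"
      using that \<rho> by linarith
    then have "f0 (X k) \<ge> f0 q - H * \<delta> powr \<alpha>"
      by (rule holder_lower_bound[OF holder H \<alpha>])
    with high[OF that(1)] approx[of "X k"] show ?thesis
      by linarith
  qed
  have covered: "\<exists>k<n. dist q (X k) < \<rho>" if "q \<in> Q" for q
  proof -
    have "f0 q \<ge> lam"
      using high[OF that] slack \<gamma> by linarith
    then show ?thesis
      using cover by (simp add: level_set_def)
  qed
  define P where "P = (\<lambda>q. \<exists>k<n. dist q (X k) < \<rho> \<and> (i, k) \<in> ?E\<^sup>*)"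
  have "P (X j)"
  proof (rule connected_induction_simple[where P = P])
    show "connected Q" "X i \<in> Q" "X j \<in> Q"
      using XQ by (simp_all add: Q_def)
    show "P (X i)"
      using ij \<rho> by (auto simp: P_def)
    fix a
    assume "a \<in> Q"
    let ?T = "Q \<inter> ball a ((\<delta> - 2 * \<rho>) / 2)"
    have "\<forall>x\<in>?T. \<forall>y\<in>?T. P x \<longrightarrow> P y"
    proof (intro ballI impI)
      fix x y
      assume x: "x \<in> ?T" and y: "y \<in> ?T" and "P x"
      then obtain k where k: "k < n" "dist x (X k) < \<rho>" "(i, k) \<in> ?E\<^sup>*"
        by (auto simp: P_def)
      obtain k' where k': "k' < n" "dist y (X k') < \<rho>"
        using covered y by auto
      have "dist x y < \<delta> - 2 * \<rho>"
        using x y dist_triangle_half_l[of x a "\<delta> - 2 * \<rho>" y] by (auto simp: dist_commute)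
      then have "dist (X k) (X k') < \<delta>"
        using k k' dist_triangle[of "X k" "X k'" x] dist_triangle[of x "X k'" y]
        by (simp add: dist_commute)
      moreover have "f (X k) \<ge> lam" "f (X k') \<ge> lam"
        using active x y k k' by auto
      ultimately have "(k, k') \<in> ?E"
        using k k' by (simp add: surr_edges_def)
      with k k' show "P y"
        by (auto simp: P_def intro: rtrancl_into_rtrancl)
    qed
    moreover have "openin (top_of_set Q) ?T" "a \<in> ?T"
      using \<open>a \<in> Q\<close> \<rho> by (simp_all add: openin_open_Int)
    ultimately show "\<exists>T. openin (top_of_set Q) T \<and> a \<in> T \<and> (\<forall>x\<in>T. \<forall>y\<in>T. P x \<longrightarrow> P y)"
      by blast
  qed
  then obtain k where k: "k < n" "dist (X j) (X k) < \<rho>" "(i, k) \<in> ?E\<^sup>*"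
    by (auto simp: P_def)
  have "f (X j) \<ge> lam"
    using high[OF XQ(2)] approx[of "X j"] slack by linarith
  then have "(k, j) \<in> ?E"
    using active[OF XQ(2) k(2)] k ij \<rho> by (simp add: surr_edges_def dist_commute)
  with k show ?thesis
    by simp
qed

section \<open>Sampling from a density\<close>

lemma prob_space_density_lborel:
  fixes f0 :: "'a::euclidean_space \<Rightarrow> real"
  assumes nonneg: "\<And>x. f0 x \<ge> 0" and int: "integrable lborel f0" and "integral\<^sup>L lborel f0 = 1"
  shows "prob_space (density lborel (\<lambda>x. ennreal (f0 x)))"
proof (rule prob_spaceI)
  have "emeasure (density lborel (\<lambda>x. ennreal (f0 x))) UNIV = (\<integral>\<^sup>+ x. ennreal (f0 x) \<partial>lborel)"
    using borel_measurable_integrable[OF int] by (subst emeasure_density) auto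
  also have "\<dots> = 1"
    using assms by (subst nn_integral_eq_integral) auto
  finally show "emeasure (density lborel (\<lambda>x. ennreal (f0 x))) (space (density lborel (\<lambda>x. ennreal (f0 x)))) = 1"
    by simp
qed

lemma measure_density_lborel:
  fixes f0 :: "'a::euclidean_space \<Rightarrow> real"
  assumes nonneg: "\<And>x. f0 x \<ge> 0" and int: "integrable lborel f0" and A: "A \<in> sets borel"
  shows "measure (density lborel (\<lambda>x. ennreal (f0 x))) A = (LINT x:A|lborel. f0 x)"
proof -
  have int_A: "integrable lborel (\<lambda>x. indicator A x * f0 x)"
    using integrable_mult_indicator[of A lborel f0] A int by simp
  have "emeasure (density lborel (\<lambda>x. ennreal (f0 x))) A = (\<integral>\<^sup>+ x. ennreal (indicator A x * f0 x) \<partial>lborel)"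
    using A borel_measurable_integrable[OF int]
    by (subst emeasure_density) (auto intro!: nn_integral_cong simp: indicator_def)
  also have "\<dots> = ennreal (LINT x:A|lborel. f0 x)"
    using int_A nonneg by (subst nn_integral_eq_integral) (auto simp: set_lebesgue_integral_def)
  moreover have "(LINT x:A|lborel. f0 x) \<ge> 0"
    unfolding set_lebesgue_integral_def using nonneg by (simp add: indicator_def)
  ultimately show ?thesis
    by (simp add: measure_def)
qed

lemma measure_density_ball_ge:
  fixes f0 :: "'a::euclidean_space \<Rightarrow> real"
  assumes nonneg: "\<And>x. f0 x \<ge> 0" and int: "integrable lborel f0"
    and lower: "\<And>x. x \<in> ball p r \<Longrightarrow> f0 x \<ge> c" and "c \<ge> 0" "r \<ge> 0"
  shows "measure (density lborel (\<lambda>x. ennreal (f0 x))) (ball p r) \<ge> c * (unit_ball_vol DIM('a) * r ^ DIM('a))"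
proof -
  have "measure lborel (ball p r) = unit_ball_vol DIM('a) * r ^ DIM('a)"
    using emeasure_ball[OF \<open>r \<ge> 0\<close>, of p] \<open>r \<ge> 0\<close> by (simp add: measure_def)
  then have "c * (unit_ball_vol DIM('a) * r ^ DIM('a)) = integral\<^sup>L lborel (\<lambda>x. indicator (ball p r) x * c)"
    by simp
  also have "\<dots> \<le> integral\<^sup>L lborel (\<lambda>x. indicator (ball p r) x * f0 x)"
  proof (rule integral_mono)
    show "integrable lborel (\<lambda>x. indicator (ball p r) x * c)"
      using emeasure_lborel_ball_finite[of p r]
      by (intro integrable_mult_left) (auto simp: integrable_indicator_iff)
    show "integrable lborel (\<lambda>x. indicator (ball p r) x * f0 x)"
      using integrable_mult_indicator[of "ball p r" lborel f0] int by simp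
  qed (auto simp: indicator_def lower)
  also have "\<dots> = measure (density lborel (\<lambda>x. ennreal (f0 x))) (ball p r)"
    by (subst measure_density_lborel[OF nonneg int]) (auto simp: set_lebesgue_integral_def)
  finally show ?thesis .
qed

lemma measure_PiM_avoid:
  assumes Q: "prob_space Q" and B: "B \<in> sets Q"
  shows "measure (PiM {..<n} (\<lambda>_. Q)) {\<omega> \<in> space (PiM {..<n} (\<lambda>_. Q)). \<forall>k<n. \<omega> k \<notin> B}
    = (1 - measure Q B) ^ n"
proof -
  interpret Q: prob_space Q by (rule Q)
  interpret product_prob_space "\<lambda>_. Q" ..
  have "{\<omega> \<in> space (PiM {..<n} (\<lambda>_. Q)). \<forall>k<n. \<omega> k \<notin> B} = PiE {..<n} (\<lambda>_. space Q - B)"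
    by (auto simp: space_PiM PiE_def Pi_def)
  moreover have "emeasure (PiM {..<n} (\<lambda>_. Q)) (PiE {..<n} (\<lambda>_. space Q - B)) = ennreal ((1 - measure Q B) ^ n)"
    using B Q.prob_compl[OF B]
    by (subst emeasure_PiM) (auto simp: Q.emeasure_eq_measure prod_ennreal simp flip: ennreal_power)
  moreover have "(1 - measure Q B) ^ n \<ge> 0"
    using Q.prob_le_1 by simp
  ultimately show ?thesis
    by (simp add: measure_def)
qed

lemma prob_PiM_avoid_le:
  assumes Q: "prob_space Q" and B: "B \<in> sets Q" and n: "n > 0"
    and mass: "measure Q B \<ge> c * ln (real n) / real n"
  shows "measure (PiM {..<n} (\<lambda>_. Q)) {\<omega> \<in> space (PiM {..<n} (\<lambda>_. Q)). \<forall>k<n. \<omega> k \<notin> B}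
    \<le> real n powr (- c)"
proof -
  have "(1 - measure Q B) ^ n \<le> exp (- measure Q B) ^ n"
    using prob_space.prob_le_1[OF Q] exp_ge_add_one_self[of "- measure Q B"]
    by (intro power_mono) auto
  also have "\<dots> = exp (- (real n * measure Q B))"
    by (simp add: exp_of_nat_mult[symmetric])
  also have "\<dots> \<le> exp (- (c * ln (real n)))"
    using mass n by (simp add: field_simps)
  also have "\<dots> = real n powr (- c)"
    using n by (simp add: powr_def)
  finally show ?thesis
    by (simp add: measure_PiM_avoid[OF Q B])
qed

lemma indep_vars_PiM_coordinates:
  assumes Q: "prob_space Q" and I: "finite I" "I \<noteq> {}"
  shows "prob_space.indep_vars (PiM I (\<lambda>_. Q)) (\<lambda>_. Q) (\<lambda>i \<omega>. \<omega> i) I"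
proof -
  interpret M: prob_space "PiM I (\<lambda>_. Q)"
    by (rule prob_space_PiM) (rule Q)
  show ?thesis
  proof (subst M.indep_vars_iff_distr_eq_PiM')
    show "(\<lambda>\<omega>. \<omega> i) \<in> measurable (PiM I (\<lambda>_. Q)) Q" if "i \<in> I" for i
      using measurable_component_singleton[of i I "\<lambda>_. Q"] that by simp
    have "distr (PiM I (\<lambda>_. Q)) (PiM I (\<lambda>_. Q)) (\<lambda>x. \<lambda>i\<in>I. x i)
        = distr (PiM I (\<lambda>_. Q)) (PiM I (\<lambda>_. Q)) (\<lambda>x. x)"
      by (rule distr_cong) (auto simp: space_PiM PiE_def extensional_def restrict_def)
    also have "\<dots> = PiM I (\<lambda>i. distr (PiM I (\<lambda>_. Q)) Q (\<lambda>x. x i))"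
      using distr_PiM_component[of I "\<lambda>_. Q"] Q by (simp, intro PiM_cong) auto
    finally show "distr (PiM I (\<lambda>_. Q)) (PiM I (\<lambda>_. Q)) (\<lambda>x. \<lambda>i\<in>I. x i)
        = PiM I (\<lambda>i. distr (PiM I (\<lambda>_. Q)) Q (\<lambda>x. x i))" .
  qed (use I in auto)
qed

lemma prob_PiM_count_ge_le:
  assumes Q: "prob_space Q" and A: "A \<in> sets Q" and n: "n > 0" and t: "t \<ge> 0"
  shows "measure (PiM {..<n} (\<lambda>_. Q))
      {\<omega> \<in> space (PiM {..<n} (\<lambda>_. Q)). (\<Sum>i<n. indicator A (\<omega> i)) \<ge> real n * measure Q A + real n * t}
    \<le> exp (- 2 * real n * t\<^sup>2)"
proof -
  interpret Q: prob_space Q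
    by (rule Q)
  interpret M: prob_space "PiM {..<n} (\<lambda>_. Q)"
    by (rule prob_space_PiM) (rule Q)
  have "M.indep_vars (\<lambda>_. Q) (\<lambda>i \<omega>. \<omega> i) {..<n}"
    using indep_vars_PiM_coordinates[OF Q, of "{..<n}"] n by auto
  then have indep: "M.indep_vars (\<lambda>_. borel) (\<lambda>i \<omega>. indicator A (\<omega> i) :: real) {..<n}"
    by (rule M.indep_vars_compose2) (simp add: borel_measurable_indicator A)
  have expectation: "M.expectation (\<lambda>\<omega>. indicator A (\<omega> i) :: real) = measure Q A" if "i < n" for i
  proof -
    have "M.expectation (\<lambda>\<omega>. indicator A (\<omega> i) :: real)
        = integral\<^sup>L (distr (PiM {..<n} (\<lambda>_. Q)) Q (\<lambda>\<omega>. \<omega> i)) (indicator A)"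
      by (rule integral_distr[symmetric])
        (use measurable_component_singleton[of i "{..<n}" "\<lambda>_. Q"] that A in \<open>auto simp: borel_measurable_indicator\<close>)
    also have "distr (PiM {..<n} (\<lambda>_. Q)) Q (\<lambda>\<omega>. \<omega> i) = Q"
      by (rule distr_PiM_component) (use Q that in auto)
    finally show ?thesis
      using A by (simp add: Int_absorb2 sets.sets_into_space)
  qed
  interpret Hoeffding_ineq "PiM {..<n} (\<lambda>_. Q)" "{..<n}" "\<lambda>i \<omega>. indicator A (\<omega> i)" "\<lambda>_. 0" "\<lambda>_. 1"
      "\<Sum>i<n. M.expectation (\<lambda>\<omega>. indicator A (\<omega> i) :: real)"
  proof unfold_locales
    show "finite {..<n}"
      by simp
    show "M.indep_vars (\<lambda>_. borel) (\<lambda>i \<omega>. indicator A (\<omega> i) :: real) {..<n}"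
      by (rule indep)
    show "AE x in PiM {..<n} (\<lambda>_. Q). indicator A (x i) \<in> {0..1::real}" if "i \<in> {..<n}" for i
      by (intro AE_I2) (simp add: indicator_def)
  qed
  have mean: "(\<Sum>i<n. M.expectation (\<lambda>\<omega>. indicator A (\<omega> i) :: real)) = real n * measure Q A"
    using expectation by simp
  have "M.prob {\<omega> \<in> space (PiM {..<n} (\<lambda>_. Q)).
        (\<Sum>i<n. indicator A (\<omega> i)) \<ge> (\<Sum>i<n. M.expectation (\<lambda>\<omega>. indicator A (\<omega> i) :: real)) + real n * t}
      \<le> exp (- 2 * (real n * t)\<^sup>2 / (\<Sum>i<n. (1 - 0)\<^sup>2))"
    by (rule Hoeffding_ineq_ge) (use n t in auto)
  also have "\<dots> = exp (- 2 * real n * t\<^sup>2)"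
    using n by (simp add: power2_eq_square)
  finally show ?thesis
    unfolding mean .
qed

lemma card_packing_le:
  fixes N :: "'a::euclidean_space set"
  assumes N: "finite N" "N \<subseteq> cball 0 R"
    and separated: "\<And>p q. p \<in> N \<Longrightarrow> q \<in> N \<Longrightarrow> p \<noteq> q \<Longrightarrow> dist p q \<ge> \<eta>"
    and \<eta>: "\<eta> > 0" and R: "R \<ge> 0"
  shows "real (card N) * (\<eta> / 2) ^ DIM('a) \<le> (R + \<eta>) ^ DIM('a)"
proof -
  define v where "v = unit_ball_vol DIM('a)"
  have v: "v > 0"
    by (simp add: v_def)
  have "disjoint_family_on (\<lambda>p. ball p (\<eta> / 2)) N"
    unfolding disjoint_family_on_def
  proof (intro ballI impI, rule ccontr)
    fix p q
    assume pq: "p \<in> N" "q \<in> N" "p \<noteq> q" and "ball p (\<eta> / 2) \<inter> ball q (\<eta> / 2) \<noteq> {}"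
    then obtain x where "dist p x < \<eta> / 2" "dist q x < \<eta> / 2"
      by auto
    then have "dist p q < \<eta>"
      using dist_triangle[of p q x] by (simp add: dist_commute)
    with separated[OF pq] show False
      by simp
  qed
  then have "(\<Sum>p\<in>N. emeasure lborel (ball p (\<eta> / 2))) = emeasure lborel (\<Union>p\<in>N. ball p (\<eta> / 2))"
    using N by (intro sum_emeasure) auto
  also have "\<dots> \<le> emeasure lborel (ball (0::'a) (R + \<eta>))"
  proof (rule emeasure_mono)
    show "(\<Union>p\<in>N. ball p (\<eta> / 2)) \<subseteq> ball 0 (R + \<eta>)"
    proof
      fix x
      assume "x \<in> (\<Union>p\<in>N. ball p (\<eta> / 2))"
      then obtain p where "p \<in> N" "dist p x < \<eta> / 2"
        by auto
      then show "x \<in> ball 0 (R + \<eta>)"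
        using N \<eta> dist_triangle[of 0 x p] by (force simp: dist_commute)
    qed
  qed simp
  finally have "ennreal (real (card N) * (v * (\<eta> / 2) ^ DIM('a))) \<le> ennreal (v * (R + \<eta>) ^ DIM('a))"
    using \<eta> R v by (simp add: emeasure_ball v_def ennreal_mult' ennreal_of_nat_eq_real_of_nat)
  then have "real (card N) * (v * (\<eta> / 2) ^ DIM('a)) \<le> v * (R + \<eta>) ^ DIM('a)"
    using \<eta> R v by (subst (asm) ennreal_le_iff) auto
  then show ?thesis
    using v by (simp add: mult.left_commute)
qed

text \<open>A maximal \<open>\<eta>\<close>-separated subset is an \<open>\<eta>\<close>-net; maximal ones exist because the packing
  bound caps the cardinality of separated subsets.\<close>

lemma exists_finite_net:
  fixes S :: "'a::euclidean_space set"
  assumes S: "S \<subseteq> cball 0 R" and \<eta>: "\<eta> > 0" and R: "R \<ge> 0"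
  shows "\<exists>N. finite N \<and> N \<subseteq> S \<and> (\<forall>q\<in>S. \<exists>p\<in>N. dist q p < \<eta>)
    \<and> real (card N) * (\<eta> / 2) ^ DIM('a) \<le> (R + \<eta>) ^ DIM('a)"
proof -
  define F where "F = {N. finite N \<and> N \<subseteq> S \<and> (\<forall>p\<in>N. \<forall>q\<in>N. p \<noteq> q \<longrightarrow> dist p q \<ge> \<eta>)}"
  have packing: "real (card N) * (\<eta> / 2) ^ DIM('a) \<le> (R + \<eta>) ^ DIM('a)" if "N \<in> F" for N
    using that S R by (intro card_packing_le[OF _ _ _ \<eta>]) (auto simp: F_def)
  define b where "b = nat \<lceil>(R + \<eta>) ^ DIM('a) / (\<eta> / 2) ^ DIM('a)\<rceil>"
  have "card N \<le> b" if "N \<in> F" for N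
  proof -
    have "real (card N) \<le> (R + \<eta>) ^ DIM('a) / (\<eta> / 2) ^ DIM('a)"
      using packing[OF that] \<eta> by (simp add: field_simps)
    then show ?thesis
      unfolding b_def by linarith
  qed
  moreover have "{} \<in> F"
    by (simp add: F_def)
  ultimately obtain N where N: "N \<in> F" and maximal: "\<And>N'. N' \<in> F \<Longrightarrow> card N' \<le> card N"
    using Nat.ex_has_greatest_nat[of "\<lambda>k. \<exists>N\<in>F. card N = k" 0 b] by force
  have "\<forall>q\<in>S. \<exists>p\<in>N. dist q p < \<eta>"
  proof (rule ccontr)
    assume "\<not> (\<forall>q\<in>S. \<exists>p\<in>N. dist q p < \<eta>)"
    then obtain q where q: "q \<in> S" "\<And>p. p \<in> N \<Longrightarrow> dist q p \<ge> \<eta>"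
      by force
    then have "q \<notin> N"
      using \<eta> by force
    moreover have "insert q N \<in> F"
      using N q by (auto simp: F_def dist_commute)
    ultimately show False
      using maximal[of "insert q N"] N by (simp add: F_def)
  qed
  then show ?thesis
    using N packing[OF N] by (auto simp: F_def)
qed

lemma exists_good_sample_event:
  fixes Q :: "'a::metric_space measure" and A :: "nat \<Rightarrow> 'a set" and n :: nat
  defines "M \<equiv> PiM {..<n} (\<lambda>_. Q)"
  assumes Q: "prob_space Q" and sets_Q: "sets Q = sets borel"
    and N: "finite N" "N \<subseteq> S" and net: "\<forall>q\<in>S. \<exists>p\<in>N. dist q p < \<eta>"
    and mass: "\<And>p. p \<in> S \<Longrightarrow> measure Q (ball p \<rho>) \<ge> 8 * ln (real n) / real n"
    and A: "\<And>k. A k \<in> sets borel" and n: "n \<ge> 2"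
  shows "\<exists>E\<in>sets M. measure M E \<ge> 1 - (real (card N) + real n) * real n powr (-8) \<and>
     (\<forall>\<omega>\<in>E. (\<forall>q\<in>S. \<exists>k<n. dist q (\<omega> k) < \<eta> + \<rho>) \<and>
        (\<forall>k\<in>{1..n}. (\<Sum>i<n. indicator (A k) (\<omega> i))
           < real n * measure Q (A k) + real n * (2 * sqrt (ln (real n) / real n))))"
proof -
  interpret M: prob_space M
    unfolding M_def by (rule prob_space_PiM) (rule Q)
  define t where "t = 2 * sqrt (ln (real n) / real n)"
  define Miss where "Miss = (\<lambda>p. {\<omega> \<in> space M. \<forall>k<n. \<omega> k \<notin> ball p \<rho>})"
  define Excess where
    "Excess = (\<lambda>k. {\<omega> \<in> space M. (\<Sum>i<n. indicator (A k) (\<omega> i)) \<ge> real n * measure Q (A k) + real n * t})"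
  have [measurable]: "ball p \<rho> \<in> sets Q" "A k \<in> sets Q" for p k
    using A by (simp_all add: sets_Q)
  have Miss_sets: "Miss p \<in> sets M" for p
    unfolding Miss_def M_def by measurable
  have Excess_sets: "Excess k \<in> sets M" for k
    unfolding Excess_def M_def by measurable
  have "measure M (Miss p) \<le> real n powr (-8)" if "p \<in> N" for p
    unfolding Miss_def M_def
    using mass[of p] that N n by (intro prob_PiM_avoid_le[OF Q]) auto
  moreover have "measure M (Excess k) \<le> real n powr (-8)" for k
  proof -
    have "measure M (Excess k) \<le> exp (- 2 * real n * t\<^sup>2)"
      unfolding Excess_def M_def using n by (intro prob_PiM_count_ge_le[OF Q]) (auto simp: t_def)
    also have "\<dots> = real n powr (-8)"
      using n by (simp add: t_def power2_eq_square powr_def)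
    finally show ?thesis .
  qed
  moreover define Bad where "Bad = (\<Union>p\<in>N. Miss p) \<union> (\<Union>k\<in>{1..n}. Excess k)"
  moreover have Bad_sets: "Bad \<in> sets M"
    unfolding Bad_def using N Miss_sets Excess_sets by (intro sets.Un sets.finite_UN) auto
  ultimately have "measure M Bad \<le> (\<Sum>p\<in>N. real n powr (-8)) + (\<Sum>k\<in>{1..n}. real n powr (-8))"
    using N Miss_sets Excess_sets unfolding Bad_def
    by (intro order_trans[OF measure_Un_le] add_mono order_trans[OF measure_UNION_le] sum_mono) auto
  then have "measure M (space M - Bad) \<ge> 1 - (real (card N) + real n) * real n powr (-8)"
    using Bad_sets by (subst M.prob_compl) (auto simp: algebra_simps)
  moreover have "space M - Bad \<in> sets M"
    using Bad_sets by auto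
  moreover have "(\<forall>q\<in>S. \<exists>k<n. dist q (\<omega> k) < \<eta> + \<rho>) \<and>
      (\<forall>k\<in>{1..n}. (\<Sum>i<n. indicator (A k) (\<omega> i)) < real n * measure Q (A k) + real n * t)"
    if \<omega>: "\<omega> \<in> space M - Bad" for \<omega>
  proof (intro conjI ballI)
    fix q
    assume "q \<in> S"
    then obtain p where p: "p \<in> N" "dist q p < \<eta>"
      using net by auto
    then obtain k where "k < n" "\<omega> k \<in> ball p \<rho>"
      using \<omega> by (auto simp: Bad_def Miss_def)
    then show "\<exists>k<n. dist q (\<omega> k) < \<eta> + \<rho>"
      using p dist_triangle[of q "\<omega> k" p] by auto
  next
    fix k
    assume "k \<in> {1..n}"
    then have "\<omega> \<notin> Excess k"
      using \<omega> by (auto simp: Bad_def)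
    then show "(\<Sum>i<n. indicator (A k) (\<omega> i)) < real n * measure Q (A k) + real n * t"
      using \<omega> by (auto simp: Excess_def)
  qed
  ultimately show ?thesis
    unfolding t_def by blast
qed

lemma r_rate_half_power:
  assumes "lam > 0" "vd > 0" "d \<ge> 1" "n \<ge> 2"
  shows "(r_rate n lam d vd / 2) ^ d = 16 * real d * ln (real n) / (lam * vd * real n)"
proof -
  have "16 * real d * ln (real n) / (lam * vd * real n) > 0"
    using assms by simp
  then show ?thesis
    using assms by (simp add: r_rate_def powr_realpow[symmetric] powr_powr)
qed

lemma r_rate_pos:
  assumes "lam > 0" "vd > 0" "d \<ge> 1" "n \<ge> 2"
  shows "r_rate n lam d vd > 0"
proof -
  have "ln (real n) > 0"
    using assms by simp
  then show ?thesis
    using assms by (simp add: r_rate_def)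
qed

lemma r_rate_tendsto_zero:
  assumes "lam > 0" "vd > 0" "d \<ge> 1"
  shows "(\<lambda>n. r_rate n lam d vd) \<longlonglongrightarrow> 0"
proof -
  have "(\<lambda>n. ln (real n) / real n) \<longlonglongrightarrow> 0"
    by (rule filterlim_compose[OF ln_x_over_x_tendsto_0 filterlim_real_sequentially])
  then have "(\<lambda>n. 16 * real d / (lam * vd) * (ln (real n) / real n)) \<longlonglongrightarrow> 16 * real d / (lam * vd) * 0"
    by (intro tendsto_mult tendsto_const)
  then have "(\<lambda>n. 16 * real d * ln (real n) / (lam * vd * real n)) \<longlonglongrightarrow> 0"
    by simp
  moreover have "\<forall>\<^sub>F n in sequentially. 0 \<le> 16 * real d * ln (real n) / (lam * vd * real n)"
    using eventually_ge_at_top[of "1::nat"] by eventually_elim (use assms in auto)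
  ultimately have "(\<lambda>n. (16 * real d * ln (real n) / (lam * vd * real n)) powr (1 / real d)) \<longlonglongrightarrow> 0"
    using assms by (intro tendsto_zero_powrI[where b = "1 / real d"]) auto
  from tendsto_mult_right_zero[OF this, of 2] show ?thesis
    by (simp add: r_rate_def[abs_def])
qed

lemma bernoulli_quarter:
  assumes "d \<ge> (1::nat)"
  shows "(1 - 1 / (4 * real d)) ^ d \<ge> 3 / 4"
proof -
  have "1 + real d * (- 1 / (4 * real d)) \<le> (1 + (- 1 / (4 * real d))) ^ d"
    using assms by (intro Bernoulli_inequality) (simp add: field_simps)
  then show ?thesis
    using assms by simp
qed

lemma one_le_ln_nat:
  assumes "n \<ge> (3::nat)"
  shows "ln (real n) \<ge> 1"
proof -
  have "exp 1 \<le> real n"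
    using exp_le assms by linarith
  then show ?thesis
    using assms by (simp add: ln_ge_iff)
qed

lemma inverse_le_sqrt_ln_ratio:
  assumes "n \<ge> (3::nat)"
  shows "1 / real n \<le> sqrt (ln (real n) / real n)"
proof -
  have "(1 / real n)\<^sup>2 \<le> 1 / real n"
    using assms by (simp add: power2_eq_square divide_simps)
  also have "\<dots> \<le> ln (real n) / real n"
    using one_le_ln_nat[OF assms] by (simp add: divide_right_mono)
  finally show ?thesis
    using assms by (metis abs_of_nonneg real_sqrt_abs real_sqrt_le_mono zero_le_divide_1_iff of_nat_0_le_iff)
qed

lemma one_le_sqrt_ln_ratio:
  assumes "3 \<le> n" "n \<le> N"
  shows "1 \<le> sqrt (real N) * sqrt (ln (real n) / real n)"
proof -
  have "real n \<le> real N * ln (real n)"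
    using assms one_le_ln_nat[OF assms(1)] by (simp add: order_trans[OF _ mult_le_cancel_left1[THEN iffD2]])
  then have "1 \<le> real N * ln (real n) / real n"
    using assms by simp
  then show ?thesis
    by (simp add: real_sqrt_mult[symmetric])
qed

lemma union_bound_le:
  assumes "real c \<le> K * real n" "K + 1 \<le> real n" "n > 0"
  shows "(real c + real n) * real n powr (-8) \<le> 1 / (real n)\<^sup>2"
proof -
  have n: "real n \<ge> 1"
    using assms by simp
  have "K * real n \<le> (real n - 1) * real n"
    using assms by (intro mult_right_mono) auto
  then have "real c + real n \<le> real n * real n"
    using assms(1) by (simp add: algebra_simps)
  then have "(real c + real n) * real n powr (-8) \<le> (real n * real n) * real n powr (-8)"
    by (rule mult_right_mono) simp
  also have "\<dots> = 1 / real n ^ 6"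
    using n by (simp add: powr_minus powr_realpow divide_simps flip: power2_eq_square power_add)
  also have "\<dots> \<le> 1 / (real n)\<^sup>2"
    using n by (intro divide_left_mono power_increasing) auto
  finally show ?thesis .
qed

lemma exists_grid_level:
  assumes \<kappa>: "0 < \<kappa>" "\<kappa> < eb / 2" and n: "n > 0"
  shows "\<exists>k\<in>{1..n}. \<kappa> \<le> real k * eb / (2 * real n) \<and> real k * eb / (2 * real n) < \<kappa> + eb / (2 * real n)"
proof -
  have eb: "eb > 0"
    using \<kappa> by simp
  define x where "x = 2 * real n * \<kappa> / eb"
  have x: "0 < x" "x < real n"
    using \<kappa> eb n by (simp_all add: x_def field_simps)
  define k where "k = nat \<lceil>x\<rceil>"
  have k: "real k = of_int \<lceil>x\<rceil>"
    using x by (simp add: k_def)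
  have "1 \<le> \<lceil>x\<rceil>" "\<lceil>x\<rceil> \<le> int n"
    using x by (simp_all add: ceiling_le_iff)
  then have "k \<in> {1..n}"
    by (auto simp: k_def le_nat_iff nat_le_iff)
  moreover have "x \<le> real k" "real k < x + 1"
    unfolding k by linarith+
  then have "\<kappa> \<le> real k * eb / (2 * real n)" "real k * eb / (2 * real n) < \<kappa> + eb / (2 * real n)"
    using eb n by (simp_all add: x_def field_simps)
  ultimately show ?thesis
    by blast
qed

lemma binder_D_rate_arith:
  fixes D c C eb H \<gamma> \<delta>\<^sub>\<alpha> t :: real and n :: nat
  assumes D: "D \<le> 6 * c / (real n - 1)" and c: "c \<le> real n * C * (\<gamma> + H * \<delta>\<^sub>\<alpha>) + C * eb / 2 + real n * t"
    and "c \<ge> 0" "n \<ge> 7" "C > 0" "eb > 0" "H > 0" "\<gamma> \<ge> 0" "\<delta>\<^sub>\<alpha> \<ge> 0"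
    and t: "t = 2 * sqrt (ln (real n) / real n)"
  shows "D \<le> 7 * C * (1 + H) * max \<gamma> \<delta>\<^sub>\<alpha> + 7 * (C * eb / 2 + 2) * sqrt (ln (real n) / real n)"
proof -
  have n: "real n > 0"
    using assms by simp
  have "H * \<delta>\<^sub>\<alpha> \<le> H * max \<gamma> \<delta>\<^sub>\<alpha>"
    using assms by (intro mult_left_mono) auto
  then have "\<gamma> + H * \<delta>\<^sub>\<alpha> \<le> (1 + H) * max \<gamma> \<delta>\<^sub>\<alpha>"
    using max.cobounded1[of \<gamma> \<delta>\<^sub>\<alpha>] by (simp add: algebra_simps)
  then have "C * (\<gamma> + H * \<delta>\<^sub>\<alpha>) \<le> C * ((1 + H) * max \<gamma> \<delta>\<^sub>\<alpha>)"
    using assms by (intro mult_left_mono) auto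
  moreover have "C * eb / 2 * (1 / real n) \<le> C * eb / 2 * sqrt (ln (real n) / real n)"
    using assms inverse_le_sqrt_ln_ratio[of n] by (intro mult_left_mono) auto
  moreover have "6 * c / (real n - 1) \<le> 7 * c / real n"
    using assms by (simp add: divide_simps) (simp add: algebra_simps mult_left_mono)
  moreover have "7 * c / real n \<le> 7 * (C * (\<gamma> + H * \<delta>\<^sub>\<alpha>)) + 7 * (C * eb / 2) * (1 / real n) + 7 * t"
    using c n by (simp add: field_simps)
  ultimately show ?thesis
    using D t by (simp add: algebra_simps)
qed

lemma holds_with_prob_at_least_mono:
  assumes "holds_with_prob_at_least M P p" "\<And>x. x \<in> space M \<Longrightarrow> P x \<Longrightarrow> Q x" "q \<le> p"
  shows "holds_with_prob_at_least M Q q"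
proof -
  obtain E where "E \<in> sets M" "E \<subseteq> {x \<in> space M. P x}" "measure M E \<ge> p"
    using assms(1) unfolding holds_with_prob_at_least_def by blast
  then show ?thesis
    unfolding holds_with_prob_at_least_def using assms(2,3) by (intro bexI[of _ E]) auto
qed

lemma holds_with_prob_at_least_everywhere:
  assumes "prob_space M" "\<And>x. x \<in> space M \<Longrightarrow> P x" "p \<le> 1"
  shows "holds_with_prob_at_least M P p"
  using assms unfolding holds_with_prob_at_least_def
  by (intro bexI[of _ "space M"]) (auto simp: prob_space.prob_space)

lemma sum_indicator_comp_eq_card:
  fixes n :: nat
  shows "(\<Sum>i<n. indicator A (X i) :: real) = real (card {i. i < n \<and> X i \<in> A})"
proof -
  have "(\<Sum>i<n. indicator A (X i) :: real) = (\<Sum>i<n. of_bool (X i \<in> A))"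
    by (simp add: indicator_def)
  also have "\<dots> = real (card ({..<n} \<inter> {i. X i \<in> A}))"
    by (rule sum_of_bool_eq) auto
  also have "{..<n} \<inter> {i. X i \<in> A} = {i. i < n \<and> X i \<in> A}"
    by auto
  finally show ?thesis .
qed

lemma holder_continuous_imp_pos_constant:
  assumes "holder_continuous \<alpha> f"
  obtains H where "H > 0" "\<And>x y. \<bar>f x - f y\<bar> \<le> H * dist x y powr \<alpha>"
proof -
  obtain H0 where H0: "\<And>x y. \<bar>f x - f y\<bar> \<le> H0 * dist x y powr \<alpha>"
    using assms unfolding holder_continuous_def by blast
  have "\<bar>f x - f y\<bar> \<le> (\<bar>H0\<bar> + 1) * dist x y powr \<alpha>" for x y
  proof -
    have "H0 * dist x y powr \<alpha> \<le> (\<bar>H0\<bar> + 1) * dist x y powr \<alpha>"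
      by (intro mult_right_mono) auto
    then show ?thesis
      using H0[of x y] by linarith
  qed
  then show ?thesis
    by (rule that[rotated]) simp
qed

lemma level_set_bounded_of_vanishing:
  fixes f :: "'a::real_normed_vector \<Rightarrow> real"
  assumes "(f \<longlongrightarrow> 0) at_infinity" "lam > 0"
  obtains R where "R \<ge> 0" "level_set f lam \<subseteq> cball 0 R"
proof -
  obtain b where b: "\<And>x. b \<le> norm x \<Longrightarrow> dist (f x) 0 < lam"
    using tendstoD[OF assms] unfolding eventually_at_infinity by blast
  have "level_set f lam \<subseteq> cball 0 (max b 0)"
  proof
    fix x
    assume "x \<in> level_set f lam"
    then have "\<not> b \<le> norm x"
      using b[of x] by (auto simp: level_set_def dist_real_def)
    then show "x \<in> cball 0 (max b 0)"
      by simp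
  qed
  then show ?thesis
    by (rule that[rotated]) simp
qed

lemma measure_lborel_unit_ball: "measure lborel (ball (0::'a::euclidean_space) 1) = unit_ball_vol DIM('a)"
  using emeasure_ball[of 1 "0::'a"] by (simp add: measure_def)

lemma binder_D_le_of_small_n:
  assumes n: "16 \<le> n" "n \<le> N" and C0: "7 * sqrt (real N) \<le> C0" and \<gamma>: "0 < \<gamma>"
    and am: "0 \<le> a" "a \<le> 1" "0 \<le> m" "m \<le> 1"
  shows "binder_D a m n (surrogate_clustering f lam \<delta> X n) (level_clustering f0 lam X n)
    \<le> C0 * (max \<gamma> (\<delta> powr \<alpha>) + sqrt (ln (real n) / real n))"
proof -
  have "binder_D a m n (surrogate_clustering f lam \<delta> X n) (level_clustering f0 lam X n) \<le> 7"
    using n am by (intro binder_D_le_seven) (auto simp: active_surrogate_clustering active_level_clustering)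
  also have "7 \<le> 7 * sqrt (real N) * sqrt (ln (real n) / real n)"
    using one_le_sqrt_ln_ratio[of n N] n by simp
  also have "\<dots> \<le> C0 * sqrt (ln (real n) / real n)"
    using C0 n by (intro mult_right_mono) auto
  also have "\<dots> \<le> C0 * (max \<gamma> (\<delta> powr \<alpha>) + sqrt (ln (real n) / real n))"
    using \<gamma> C0 order_trans[OF _ C0, of 0] by (intro mult_left_mono) auto
  finally show ?thesis .
qed

section \<open>The regular setting\<close>

text \<open>Of the two clauses of condition (iii) only one is kept: they are contrapositives of each
  other.\<close>

locale regular_level_density =
  fixes f0 :: "'a::euclidean_space \<Rightarrow> real" and lam \<alpha> H C eb R :: real
  assumes nonneg: "\<And>x. f0 x \<ge> 0"
    and integrable: "integrable lborel f0"
    and density: "integral\<^sup>L lborel f0 = 1"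
    and lam_pos: "lam > 0"
    and holder: "\<And>x y. \<bar>f0 x - f0 y\<bar> \<le> H * dist x y powr \<alpha>"
    and H_pos: "H > 0" and \<alpha>_pos: "\<alpha> > 0"
    and C_pos: "C > 0" and eb_pos: "eb > 0"
    and margin_mass: "\<And>\<epsilon>. 0 < \<epsilon> \<Longrightarrow> \<epsilon> < eb \<Longrightarrow> (LINT x:{x. \<bar>f0 x - lam\<bar> \<le> \<epsilon>}|lborel. f0 x) \<le> C * \<epsilon>"
    and components_stable: "\<And>lam_l lam_h x y. lam - eb \<le> lam_l \<Longrightarrow> lam_l < lam_h \<Longrightarrow> lam_h \<le> lam + eb \<Longrightarrow>
        x \<in> level_set f0 lam_h \<Longrightarrow> y \<in> level_set f0 lam_h \<Longrightarrow>
        connected_component (level_set f0 lam_l) x y \<Longrightarrow> connected_component (level_set f0 lam_h) x y"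
    and level_set_bounded: "level_set f0 lam \<subseteq> cball 0 R" and R_nonneg: "R \<ge> 0"
begin

abbreviation sample_distr :: "'a measure" where
  "sample_distr \<equiv> density lborel (\<lambda>x. ennreal (f0 x))"

abbreviation margin :: "real \<Rightarrow> 'a set" where
  "margin \<epsilon> \<equiv> {x. \<bar>f0 x - lam\<bar> \<le> \<epsilon>}"

lemma prob_space_sample_distr: "prob_space sample_distr"
  by (rule prob_space_density_lborel[OF nonneg integrable density])

lemma f0_borel [measurable]: "f0 \<in> borel_measurable borel"
  using borel_measurable_integrable[OF integrable] by simp

lemma surr_path_iff_connected_off_margin:
  assumes approx: "\<And>x. \<bar>f x - f0 x\<bar> \<le> \<gamma>" and \<gamma>: "\<gamma> > 0"
    and \<kappa>: "\<kappa> = \<gamma> + H * \<delta> powr \<alpha>" "\<kappa> \<le> eb"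
    and \<rho>: "0 < \<rho>" "2 * \<rho> < \<delta>"
    and cover: "\<forall>q\<in>level_set f0 lam. \<exists>k<n. dist q (X k) < \<rho>"
    and ij: "i < n" "j < n" "f0 (X i) \<ge> lam + \<kappa>" "f0 (X j) \<ge> lam + \<kappa>"
  shows "(i, j) \<in> (surr_edges f lam \<delta> X n)\<^sup>* \<longleftrightarrow> connected_component (level_set f0 lam) (X i) (X j)"
proof
  have slack: "H * \<delta> powr \<alpha> \<ge> 0"
    using H_pos by simp
  have in_level: "X i \<in> level_set f0 t" "X j \<in> level_set f0 t" if "t \<le> lam + \<kappa>" for t
    using ij that by (auto simp: level_set_def)
  {
    assume path: "(i, j) \<in> (surr_edges f lam \<delta> X n)\<^sup>*"
    have "f (X i) \<ge> lam"
      using approx[of "X i"] ij \<kappa> slack by linarith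
    with path have "connected_component (level_set f0 (lam - \<gamma> - H * \<delta> powr \<alpha>)) (X i) (X j)"
      using H_pos by (intro connected_component_of_surr_path[OF holder _ \<alpha>_pos approx]) auto
    then show "connected_component (level_set f0 lam) (X i) (X j)"
      using components_stable[of "lam - \<kappa>" lam "X i" "X j"] in_level \<kappa> \<gamma> slack
      by (simp add: algebra_simps)
  next
    assume "connected_component (level_set f0 lam) (X i) (X j)"
    then have "connected_component (level_set f0 (lam + \<gamma> + H * \<delta> powr \<alpha>)) (X i) (X j)"
      using components_stable[of lam "lam + \<kappa>" "X i" "X j"] in_level \<kappa> \<gamma> slack eb_pos
      by (simp add: algebra_simps)
    then show "(i, j) \<in> (surr_edges f lam \<delta> X n)\<^sup>*"
      using H_pos \<gamma> by (intro surr_path_of_connected_component[OF holder _ \<alpha>_pos approx _ \<rho> cover ij(1,2)]) auto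
  }
qed

lemma binder_D_le_card_margin:
  assumes approx: "\<And>x. \<bar>f x - f0 x\<bar> \<le> \<gamma>" and \<gamma>: "\<gamma> > 0"
    and \<kappa>: "\<kappa> = \<gamma> + H * \<delta> powr \<alpha>" "\<kappa> \<le> eb"
    and \<rho>: "0 < \<rho>" "2 * \<rho> < \<delta>"
    and cover: "\<forall>q\<in>level_set f0 lam. \<exists>k<n. dist q (X k) < \<rho>"
    and am: "0 \<le> a" "a \<le> 1" "0 \<le> m" "m \<le> 1" and n: "n \<ge> 2"
  shows "binder_D a m n (surrogate_clustering f lam \<delta> X n) (level_clustering f0 lam X n)
    \<le> 6 * real (card {i. i < n \<and> X i \<in> margin \<kappa>}) / (real n - 1)"
proof -
  have \<gamma>_le: "\<gamma> \<le> \<kappa>"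
    using \<kappa> H_pos by simp
  define G where "G = {i. \<kappa> < \<bar>f0 (X i) - lam\<bar>}"
  have "binder_loss a m n (surrogate_clustering f lam \<delta> X n) (level_clustering f0 lam X n)
      \<le> 3 * real n * real (card ({..<n} - G))"
  proof (rule binder_loss_le_card_disagreement)
    show "active (surrogate_clustering f lam \<delta> X n) \<subseteq> {..<n}" "active (level_clustering f0 lam X n) \<subseteq> {..<n}"
      by (auto simp: active_surrogate_clustering active_level_clustering)
    show "i \<in> active (surrogate_clustering f lam \<delta> X n) \<longleftrightarrow> i \<in> active (level_clustering f0 lam X n)"
      if "i \<in> G" "i < n" for i
      using that approx[of "X i"] \<gamma>_le
      by (auto simp: G_def active_surrogate_clustering active_level_clustering level_set_def abs_if split: if_splits)
    show "same_cluster (surrogate_clustering f lam \<delta> X n) i j \<longleftrightarrow> same_cluster (level_clustering f0 lam X n) i j"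
      if "i \<in> G" "j \<in> G" "i \<in> active (surrogate_clustering f lam \<delta> X n)"
        "j \<in> active (surrogate_clustering f lam \<delta> X n)" for i j
    proof -
      have ij: "i < n" "j < n" "f (X i) \<ge> lam" "f (X j) \<ge> lam"
        using that by (auto simp: active_surrogate_clustering)
      then have high: "f0 (X i) \<ge> lam + \<kappa>" "f0 (X j) \<ge> lam + \<kappa>"
        using that approx[of "X i"] approx[of "X j"] \<gamma>_le by (auto simp: G_def abs_if split: if_splits)
      have "same_cluster (surrogate_clustering f lam \<delta> X n) i j \<longleftrightarrow> (i, j) \<in> (surr_edges f lam \<delta> X n)\<^sup>*"
        using ij by (simp add: same_cluster_surrogate_clustering_iff)
      also have "\<dots> \<longleftrightarrow> connected_component (level_set f0 lam) (X i) (X j)"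
        by (rule surr_path_iff_connected_off_margin[OF approx \<gamma> \<kappa> \<rho> cover ij(1,2) high])
      also have "\<dots> \<longleftrightarrow> same_cluster (level_clustering f0 lam X n) i j"
        using same_cluster_level_clustering_iff[of X i f0 lam n j] high ij \<gamma>_le \<gamma>
        by (simp add: level_set_def)
      finally show ?thesis .
    qed
  qed (use am in auto)
  moreover have "{..<n} - G = {i. i < n \<and> X i \<in> margin \<kappa>}"
    by (auto simp: G_def)
  ultimately show ?thesis
    using binder_D_le_of_binder_loss_le[OF _ n] by simp
qed

lemma measure_ball_ge_rate:
  assumes n: "n \<ge> 2" and r: "r = r_rate n lam DIM('a) (unit_ball_vol DIM('a))"
    and small: "H * r powr \<alpha> \<le> lam / 3" and p: "p \<in> level_set f0 lam"
  shows "measure sample_distr (ball p (r / 2 * (1 - 1 / (4 * real DIM('a))))) \<ge> 8 * ln (real n) / real n"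
proof -
  define d where "d = DIM('a)"
  define vd where "vd = unit_ball_vol (real d)"
  define s where "s = 16 * real d * ln (real n) / (lam * vd * real n)"
  define \<rho> where "\<rho> = r / 2 * (1 - 1 / (4 * real d))"
  have d: "d \<ge> 1" and vd: "vd > 0"
    by (simp_all add: d_def vd_def DIM_positive)
  have ln_pos: "ln (real n) > 0"
    using n by simp
  then have s: "s > 0"
    using lam_pos vd d n by (simp add: s_def)
  have "r > 0"
    using r_rate_pos[OF lam_pos vd d n] by (simp add: r d_def vd_def)
  then have \<rho>: "0 < \<rho>" "\<rho> \<le> r"
    using d by (simp_all add: \<rho>_def field_simps)
  have "f0 x \<ge> 2 * lam / 3" if "x \<in> ball p \<rho>" for x
  proof -
    have "f0 x \<ge> f0 p - H * r powr \<alpha>"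
      using that \<rho> H_pos \<alpha>_pos by (intro holder_lower_bound[OF holder]) auto
    then show ?thesis
      using p small by (simp add: level_set_def)
  qed
  then have ball: "2 * lam / 3 * (vd * \<rho> ^ d) \<le> measure sample_distr (ball p \<rho>)"
    using \<rho> lam_pos unfolding vd_def d_def by (intro measure_density_ball_ge[OF nonneg integrable]) auto
  have "(r / 2) ^ d = s"
    using r_rate_half_power[OF lam_pos vd d n] by (simp add: r s_def d_def vd_def)
  then have "\<rho> ^ d = s * (1 - 1 / (4 * real d)) ^ d"
    unfolding \<rho>_def by (simp only: power_mult_distrib)
  then have "s * (3 / 4) \<le> \<rho> ^ d"
    using bernoulli_quarter[OF d] s by simp
  have "8 * ln (real n) / real n \<le> real d * (8 * ln (real n) / real n)"
    using mult_right_mono[of 1 "real d" "8 * ln (real n) / real n"] d ln_pos by simp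
  also have "\<dots> = 2 * lam / 3 * (vd * (s * (3 / 4)))"
    using lam_pos vd n by (simp add: s_def field_simps)
  also have "\<dots> \<le> 2 * lam / 3 * (vd * \<rho> ^ d)"
    using \<open>s * (3 / 4) \<le> \<rho> ^ d\<close> lam_pos vd by (intro mult_left_mono) auto
  finally show ?thesis
    using ball by (simp add: \<rho>_def d_def)
qed

lemma exists_small_net:
  assumes n: "n \<ge> 3" and r: "r = r_rate n lam DIM('a) (unit_ball_vol DIM('a))" and r_le: "r \<le> 1"
  shows "\<exists>N. finite N \<and> N \<subseteq> level_set f0 lam
    \<and> (\<forall>q\<in>level_set f0 lam. \<exists>p\<in>N. dist q p < r / (16 * real DIM('a)))
    \<and> real (card N) \<le> (R + 1) ^ DIM('a) * (16 * real DIM('a)) ^ DIM('a) * lam * unit_ball_vol DIM('a) * real n"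
proof -
  define d where "d = DIM('a)"
  define vd where "vd = unit_ball_vol (real d)"
  define s where "s = 16 * real d * ln (real n) / (lam * vd * real n)"
  define \<eta> where "\<eta> = r / (16 * real d)"
  have d: "d \<ge> 1" and vd: "vd > 0"
    by (simp_all add: d_def vd_def DIM_positive)
  have ln: "ln (real n) \<ge> 1"
    by (rule one_le_ln_nat[OF n])
  then have s: "s > 0"
    using lam_pos vd d n by (simp add: s_def)
  have "r > 0"
    using r_rate_pos[OF lam_pos vd d] n by (simp add: r d_def vd_def)
  then have \<eta>: "0 < \<eta>" "\<eta> \<le> 1"
    using d r_le by (simp_all add: \<eta>_def field_simps)
  obtain N where N: "finite N" "N \<subseteq> level_set f0 lam" "\<forall>q\<in>level_set f0 lam. \<exists>p\<in>N. dist q p < \<eta>"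
    and packing: "real (card N) * (\<eta> / 2) ^ d \<le> (R + \<eta>) ^ d"
    using exists_finite_net[OF level_set_bounded \<eta>(1) R_nonneg] by (auto simp: d_def)
  have "\<eta> / 2 = (r / 2) / (16 * real d)"
    by (simp add: \<eta>_def)
  then have "(\<eta> / 2) ^ d = (r / 2) ^ d / (16 * real d) ^ d"
    by (simp only: power_divide)
  also have "(r / 2) ^ d = s"
    using r_rate_half_power[OF lam_pos vd d] n by (simp add: r s_def d_def vd_def)
  finally have "(\<eta> / 2) ^ d = s / (16 * real d) ^ d" .
  moreover have "(R + \<eta>) ^ d \<le> (R + 1) ^ d"
    using \<eta> R_nonneg by (intro power_mono) auto
  ultimately have "real (card N) * s / (16 * real d) ^ d \<le> (R + 1) ^ d"
    using packing by simp
  moreover have "(16 * real d) ^ d > 0"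
    using d by simp
  ultimately have "real (card N) * s \<le> (R + 1) ^ d * (16 * real d) ^ d"
    by (simp add: pos_divide_le_eq)
  then have "real (card N) \<le> (R + 1) ^ d * (16 * real d) ^ d * lam * vd * real n / (16 * real d * ln (real n))"
    using s lam_pos vd n ln by (simp add: s_def field_simps)
  also have "\<dots> \<le> (R + 1) ^ d * (16 * real d) ^ d * lam * vd * real n / 1"
  proof (rule divide_left_mono)
    show "1 \<le> 16 * real d * ln (real n)"
      using d ln mult_mono[of 1 "16 * real d" 1 "ln (real n)"] by simp
  qed (use R_nonneg lam_pos vd d ln in auto)
  finally show ?thesis
    using N by (auto simp: \<eta>_def d_def vd_def)
qed

text \<open>The sample hits every ball of radius \<open>r/2 (1 - 1/(4d))\<close> around an \<open>r/(16d)\<close>-net of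
  \<open>S\<^sub>l\<^sub>a\<^sub>m\<close>, each of mass at least \<open>8 ln n / n\<close>, and Hoeffding's inequality holds on the grid of
  margin widths \<open>k eb / (2n)\<close>, \<open>k = 1..n\<close>.\<close>

lemma good_sample_event:
  assumes n: "n \<ge> 3" and r: "r = r_rate n lam DIM('a) (unit_ball_vol DIM('a))"
    and r_le: "r \<le> 1" and small: "H * r powr \<alpha> \<le> lam / 3"
    and large: "(R + 1) ^ DIM('a) * (16 * real DIM('a)) ^ DIM('a) * lam * unit_ball_vol DIM('a) + 1 \<le> real n"
  shows "\<exists>E\<in>sets (sample_space f0 n). measure (sample_space f0 n) E \<ge> 1 - 1 / (real n)\<^sup>2 \<and>
    (\<forall>\<omega>\<in>E. (\<forall>q\<in>level_set f0 lam. \<exists>k<n. dist q (\<omega> k) < r / 2 - r / (16 * real DIM('a))) \<and>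
      (\<forall>k\<in>{1..n}. (\<Sum>i<n. indicator (margin (real k * eb / (2 * real n))) (\<omega> i))
         < real n * measure sample_distr (margin (real k * eb / (2 * real n)))
           + real n * (2 * sqrt (ln (real n) / real n))))"
proof -
  obtain N where N: "finite N" "N \<subseteq> level_set f0 lam"
    and net: "\<forall>q\<in>level_set f0 lam. \<exists>p\<in>N. dist q p < r / (16 * real DIM('a))"
    and card: "real (card N) \<le> (R + 1) ^ DIM('a) * (16 * real DIM('a)) ^ DIM('a) * lam * unit_ball_vol DIM('a) * real n"
    using exists_small_net[OF n r r_le] by blast
  have "\<exists>E\<in>sets (sample_space f0 n). measure (sample_space f0 n) E \<ge> 1 - (real (card N) + real n) * real n powr (-8) \<and>
    (\<forall>\<omega>\<in>E. (\<forall>q\<in>level_set f0 lam. \<exists>k<n. dist q (\<omega> k) < r / (16 * real DIM('a)) + r / 2 * (1 - 1 / (4 * real DIM('a)))) \<and>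
      (\<forall>k\<in>{1..n}. (\<Sum>i<n. indicator (margin (real k * eb / (2 * real n))) (\<omega> i))
         < real n * measure sample_distr (margin (real k * eb / (2 * real n)))
           + real n * (2 * sqrt (ln (real n) / real n))))"
    unfolding sample_space_def using n measure_ball_ge_rate[OF _ r small]
    by (intro exists_good_sample_event[OF prob_space_sample_distr _ N net]) auto
  moreover have "r / (16 * real DIM('a)) + r / 2 * (1 - 1 / (4 * real DIM('a))) = r / 2 - r / (16 * real DIM('a))"
    by (simp add: field_simps)
  moreover have "(real (card N) + real n) * real n powr (-8) \<le> 1 / (real n)\<^sup>2"
    using card large n by (intro union_bound_le) auto
  ultimately show ?thesis
    by (smt (verit, best))
qed

lemma card_margin_le:
  assumes counts: "\<forall>k\<in>{1..n}. (\<Sum>i<n. indicator (margin (real k * eb / (2 * real n))) (X i))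
      < real n * measure sample_distr (margin (real k * eb / (2 * real n))) + real n * t"
    and \<kappa>: "0 < \<kappa>" "\<kappa> < eb / 2" and n: "n > 0"
  shows "real (card {i. i < n \<and> X i \<in> margin \<kappa>}) \<le> real n * C * \<kappa> + C * eb / 2 + real n * t"
proof -
  obtain k where k: "k \<in> {1..n}" and \<kappa>_le: "\<kappa> \<le> real k * eb / (2 * real n)"
    and le_\<kappa>: "real k * eb / (2 * real n) < \<kappa> + eb / (2 * real n)"
    using exists_grid_level[OF \<kappa> n] by blast
  define \<epsilon> where "\<epsilon> = real k * eb / (2 * real n)"
  have "eb / (2 * real n) \<le> eb / 2"
    using n eb_pos by (intro divide_left_mono) auto
  then have \<epsilon>: "0 < \<epsilon>" "\<epsilon> < eb"
    using \<kappa> \<kappa>_le le_\<kappa> by (simp_all add: \<epsilon>_def)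
  have "measure sample_distr (margin \<epsilon>) \<le> C * \<epsilon>"
    using margin_mass[OF \<epsilon>] by (simp add: measure_density_lborel[OF nonneg integrable])
  also have "\<dots> \<le> C * (\<kappa> + eb / (2 * real n))"
    using le_\<kappa> C_pos by (intro mult_left_mono) (auto simp: \<epsilon>_def)
  finally have "real n * measure sample_distr (margin \<epsilon>) \<le> real n * (C * (\<kappa> + eb / (2 * real n)))"
    by (intro mult_left_mono) auto
  also have "\<dots> = real n * C * \<kappa> + C * eb / 2"
    using n by (simp add: field_simps)
  finally have mass: "real n * measure sample_distr (margin \<epsilon>) \<le> real n * C * \<kappa> + C * eb / 2" .
  have "card {i. i < n \<and> X i \<in> margin \<kappa>} \<le> card {i. i < n \<and> X i \<in> margin \<epsilon>}"
    using \<kappa>_le by (intro card_mono) (auto simp: \<epsilon>_def)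
  then have "real (card {i. i < n \<and> X i \<in> margin \<kappa>}) \<le> (\<Sum>i<n. indicator (margin \<epsilon>) (X i))"
    by (simp add: sum_indicator_comp_eq_card)
  also have "\<dots> < real n * measure sample_distr (margin \<epsilon>) + real n * t"
    using counts k by (simp add: \<epsilon>_def)
  finally show ?thesis
    using mass by linarith
qed

lemma binder_D_bound_large_n:
  assumes n: "n \<ge> 16" and r: "r = r_rate n lam DIM('a) (unit_ball_vol DIM('a))"
    and r_le: "r \<le> 1" and small: "H * r powr \<alpha> \<le> lam / 3"
    and large: "(R + 1) ^ DIM('a) * (16 * real DIM('a)) ^ DIM('a) * lam * unit_ball_vol DIM('a) + 1 \<le> real n"
    and holder_small: "\<And>\<delta>. 0 \<le> \<delta> \<Longrightarrow> \<delta> < \<delta>bar \<Longrightarrow> H * \<delta> powr \<alpha> \<le> eb / 4"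
    and am: "0 \<le> a" "a \<le> 1" "0 \<le> m" "m \<le> 1"
  shows "holds_with_prob_at_least (sample_space f0 n)
    (\<lambda>X. \<forall>\<delta> \<gamma>. r \<le> \<delta> \<and> \<delta> < \<delta>bar \<and> 0 < \<gamma> \<and> \<gamma> < eb / 4 \<longrightarrow>
       (\<forall>f. (\<forall>x. \<bar>f x - f0 x\<bar> \<le> \<gamma>) \<longrightarrow>
          binder_D a m n (surrogate_clustering f lam \<delta> X n) (level_clustering f0 lam X n)
            \<le> 7 * C * (1 + H) * max \<gamma> (\<delta> powr \<alpha>) + 7 * (C * eb / 2 + 2) * sqrt (ln (real n) / real n)))
    (1 - 1 / (real n)\<^sup>2)"
proof -
  define t where "t = 2 * sqrt (ln (real n) / real n)"
  define \<rho> where "\<rho> = r / 2 - r / (16 * real DIM('a))"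
  obtain E where E: "E \<in> sets (sample_space f0 n)" "measure (sample_space f0 n) E \<ge> 1 - 1 / (real n)\<^sup>2"
    and cover: "\<And>X. X \<in> E \<Longrightarrow> \<forall>q\<in>level_set f0 lam. \<exists>k<n. dist q (X k) < \<rho>"
    and counts: "\<And>X. X \<in> E \<Longrightarrow> \<forall>k\<in>{1..n}. (\<Sum>i<n. indicator (margin (real k * eb / (2 * real n))) (X i))
         < real n * measure sample_distr (margin (real k * eb / (2 * real n))) + real n * t"
    using good_sample_event[OF _ r r_le small large] n unfolding \<rho>_def t_def by auto
  have "r > 0"
    using r_rate_pos[OF lam_pos] n by (simp add: r Suc_le_eq)
  moreover have "r / (16 * real DIM('a)) \<le> r / (16 * 1)"
    using \<open>r > 0\<close> by (intro divide_left_mono) (simp_all add: Suc_le_eq)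
  ultimately have \<rho>: "0 < \<rho>" "2 * \<rho> < r"
    unfolding \<rho>_def by auto
  have "binder_D a m n (surrogate_clustering f lam \<delta> X n) (level_clustering f0 lam X n)
      \<le> 7 * C * (1 + H) * max \<gamma> (\<delta> powr \<alpha>) + 7 * (C * eb / 2 + 2) * sqrt (ln (real n) / real n)"
    if X: "X \<in> E" and \<delta>: "r \<le> \<delta>" "\<delta> < \<delta>bar" and \<gamma>: "0 < \<gamma>" "\<gamma> < eb / 4"
      and approx: "\<And>x. \<bar>f x - f0 x\<bar> \<le> \<gamma>" for X \<delta> \<gamma> f
  proof -
    define \<kappa> where "\<kappa> = \<gamma> + H * \<delta> powr \<alpha>"
    have "H * \<delta> powr \<alpha> \<le> eb / 4"
      using holder_small \<delta> \<open>r > 0\<close> by simp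
    then have \<kappa>: "0 < \<kappa>" "\<kappa> < eb / 2"
      using \<gamma> H_pos by (simp_all add: \<kappa>_def add_pos_nonneg)
    have "binder_D a m n (surrogate_clustering f lam \<delta> X n) (level_clustering f0 lam X n)
        \<le> 6 * real (card {i. i < n \<and> X i \<in> margin \<kappa>}) / (real n - 1)"
      using \<kappa> \<rho> \<delta> n cover[OF X] am
      by (intro binder_D_le_card_margin[OF approx \<gamma>(1) \<kappa>_def]) auto
    moreover have "real (card {i. i < n \<and> X i \<in> margin \<kappa>}) \<le> real n * C * \<kappa> + C * eb / 2 + real n * t"
      using n by (intro card_margin_le[OF counts[OF X] \<kappa>]) auto
    ultimately show ?thesis
      using n C_pos eb_pos H_pos \<gamma> unfolding \<kappa>_def by (intro binder_D_rate_arith[OF _ _ _ _ _ _ _ _ _ t_def]) auto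
  qed
  then show ?thesis
    unfolding holds_with_prob_at_least_def using E sets.sets_into_space[OF E(1)] by blast
qed

lemma eventually_large_sample:
  "\<forall>\<^sub>F n in sequentially. r_rate n lam DIM('a) (unit_ball_vol DIM('a)) \<le> 1
    \<and> H * r_rate n lam DIM('a) (unit_ball_vol DIM('a)) powr \<alpha> \<le> lam / 3
    \<and> (R + 1) ^ DIM('a) * (16 * real DIM('a)) ^ DIM('a) * lam * unit_ball_vol DIM('a) + 1 \<le> real n"
proof -
  have rate: "(\<lambda>n. r_rate n lam DIM('a) (unit_ball_vol DIM('a))) \<longlonglongrightarrow> 0"
    using lam_pos by (intro r_rate_tendsto_zero) (simp_all add: DIM_positive)
  have "(\<lambda>n. H * r_rate n lam DIM('a) (unit_ball_vol DIM('a)) powr \<alpha>) \<longlonglongrightarrow> H * 0"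
    using \<alpha>_pos by (intro tendsto_mult tendsto_const tendsto_zero_powrI[OF rate]) (auto simp: r_rate_def)
  then have "\<forall>\<^sub>F n in sequentially. H * r_rate n lam DIM('a) (unit_ball_vol DIM('a)) powr \<alpha> < lam / 3"
    using lam_pos by (intro order_tendstoD) auto
  moreover have "\<forall>\<^sub>F n in sequentially. r_rate n lam DIM('a) (unit_ball_vol DIM('a)) < 1"
    using rate by (intro order_tendstoD) auto
  moreover have "\<forall>\<^sub>F n in sequentially.
      (R + 1) ^ DIM('a) * (16 * real DIM('a)) ^ DIM('a) * lam * unit_ball_vol DIM('a) + 1 \<le> real n"
    using filterlim_real_sequentially by (simp add: filterlim_at_top)
  ultimately show ?thesis
    by eventually_elim auto
qed

text \<open>The summand \<open>7 \<surd>N\<^sub>0\<close> of \<open>C0\<close> absorbs the sample sizes \<open>n < N\<^sub>0\<close> through \<open>D \<le> 7\<close>.\<close>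

lemma binder_D_bound:
  assumes N0: "\<And>n. n \<ge> N0 \<Longrightarrow> r_rate n lam DIM('a) (unit_ball_vol DIM('a)) \<le> 1
      \<and> H * r_rate n lam DIM('a) (unit_ball_vol DIM('a)) powr \<alpha> \<le> lam / 3
      \<and> (R + 1) ^ DIM('a) * (16 * real DIM('a)) ^ DIM('a) * lam * unit_ball_vol DIM('a) + 1 \<le> real n"
    and C0: "C0 = 7 * C * (1 + H) + 7 * (C * eb / 2 + 2) + 7 * sqrt (real N0)"
    and holder_small: "\<And>\<delta>. 0 \<le> \<delta> \<Longrightarrow> \<delta> < \<delta>bar \<Longrightarrow> H * \<delta> powr \<alpha> \<le> eb / 4"
    and n: "n \<ge> 16" and am: "0 \<le> a" "a \<le> 1" "0 \<le> m" "m \<le> 1"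
  shows "holds_with_prob_at_least (sample_space f0 n)
    (\<lambda>X. \<forall>\<delta> \<gamma>. r_rate n lam DIM('a) (measure lborel (ball (0::'a) 1)) \<le> \<delta> \<and> \<delta> < \<delta>bar
        \<and> 0 < \<gamma> \<and> \<gamma> < eb / 4 \<longrightarrow>
       (\<forall>f. (\<forall>x. \<bar>f x - f0 x\<bar> \<le> \<gamma>) \<longrightarrow>
          binder_D a m n (surrogate_clustering f lam \<delta> X n) (level_clustering f0 lam X n)
            \<le> C0 * (max \<gamma> (\<delta> powr \<alpha>) + sqrt (ln (real n) / real n))))
    (1 - (1 + real n) / (real n)\<^sup>2)"
proof (cases "n \<ge> N0")
  case True
  let ?L = "sqrt (ln (real n) / real n)"
  have coefficients: "7 * C * (1 + H) * max \<gamma> (\<delta> powr \<alpha>) + 7 * (C * eb / 2 + 2) * ?L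
      \<le> C0 * (max \<gamma> (\<delta> powr \<alpha>) + ?L)" if "0 < \<gamma>" for \<gamma> \<delta>
  proof -
    have "7 * C * (1 + H) * max \<gamma> (\<delta> powr \<alpha>) \<le> C0 * max \<gamma> (\<delta> powr \<alpha>)"
      using that C_pos eb_pos H_pos by (intro mult_right_mono) (auto simp: C0)
    moreover have "7 * (C * eb / 2 + 2) * ?L \<le> C0 * ?L"
      using C_pos eb_pos H_pos n by (intro mult_right_mono) (auto simp: C0)
    ultimately show ?thesis
      by (simp add: distrib_left)
  qed
  from N0[OF True] have "r_rate n lam DIM('a) (unit_ball_vol DIM('a)) \<le> 1"
      "H * r_rate n lam DIM('a) (unit_ball_vol DIM('a)) powr \<alpha> \<le> lam / 3"
      "(R + 1) ^ DIM('a) * (16 * real DIM('a)) ^ DIM('a) * lam * unit_ball_vol DIM('a) + 1 \<le> real n"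
    by auto
  note large = binder_D_bound_large_n[where \<delta>bar = \<delta>bar, OF n refl this holder_small am]
  have prob: "1 - (1 + real n) / (real n)\<^sup>2 \<le> 1 - 1 / (real n)\<^sup>2"
    by (simp add: divide_right_mono)
  show ?thesis
    unfolding measure_lborel_unit_ball
  proof (rule holds_with_prob_at_least_mono[OF large _ prob])
    fix X
    assume bound: "\<forall>\<delta> \<gamma>. r_rate n lam DIM('a) (unit_ball_vol DIM('a)) \<le> \<delta> \<and> \<delta> < \<delta>bar \<and> 0 < \<gamma> \<and> \<gamma> < eb / 4 \<longrightarrow>
        (\<forall>f. (\<forall>x. \<bar>f x - f0 x\<bar> \<le> \<gamma>) \<longrightarrow>
           binder_D a m n (surrogate_clustering f lam \<delta> X n) (level_clustering f0 lam X n)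
             \<le> 7 * C * (1 + H) * max \<gamma> (\<delta> powr \<alpha>) + 7 * (C * eb / 2 + 2) * ?L)"
    show "\<forall>\<delta> \<gamma>. r_rate n lam DIM('a) (unit_ball_vol DIM('a)) \<le> \<delta> \<and> \<delta> < \<delta>bar \<and> 0 < \<gamma> \<and> \<gamma> < eb / 4 \<longrightarrow>
        (\<forall>f. (\<forall>x. \<bar>f x - f0 x\<bar> \<le> \<gamma>) \<longrightarrow>
           binder_D a m n (surrogate_clustering f lam \<delta> X n) (level_clustering f0 lam X n)
             \<le> C0 * (max \<gamma> (\<delta> powr \<alpha>) + ?L))"
      using bound coefficients by (meson order_trans)
  qed auto
next
  case False
  have "7 * sqrt (real N0) \<le> C0"
    using C_pos eb_pos H_pos by (simp add: C0)
  then show ?thesis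
    unfolding sample_space_def using False n am
    by (intro holds_with_prob_at_least_everywhere prob_space_PiM prob_space_sample_distr)
      (auto intro!: binder_D_le_of_small_n[where N = N0])
qed

theorem uniform_clustering_bound:
  "\<exists>C0 \<delta>bar \<gamma>bar. C0 > 0 \<and> \<delta>bar > 0 \<and> \<gamma>bar > 0 \<and>
    (\<forall>n::nat. \<forall>a m::real. n \<ge> 16 \<and> 0 < a \<and> a \<le> 1 \<and> 0 < m \<and> m \<le> 1 \<and> a \<le> 2 * m \<longrightarrow>
      holds_with_prob_at_least (sample_space f0 n)
        (\<lambda>X. \<forall>\<delta> \<gamma>. r_rate n lam DIM('a) (measure lborel (ball (0::'a) 1)) \<le> \<delta> \<and> \<delta> < \<delta>bar
                 \<and> 0 < \<gamma> \<and> \<gamma> < \<gamma>bar \<longrightarrow>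
             (\<forall>f. (\<forall>x. \<bar>f x - f0 x\<bar> \<le> \<gamma>) \<longrightarrow>
                binder_D a m n (surrogate_clustering f lam \<delta> X n) (level_clustering f0 lam X n)
                  \<le> C0 * (max \<gamma> (\<delta> powr \<alpha>) + sqrt (ln (real n) / real n))))
        (1 - (1 + real n) / (real n)\<^sup>2))"
proof -
  obtain N0 where N0: "\<And>n. n \<ge> N0 \<Longrightarrow> r_rate n lam DIM('a) (unit_ball_vol DIM('a)) \<le> 1
      \<and> H * r_rate n lam DIM('a) (unit_ball_vol DIM('a)) powr \<alpha> \<le> lam / 3
      \<and> (R + 1) ^ DIM('a) * (16 * real DIM('a)) ^ DIM('a) * lam * unit_ball_vol DIM('a) + 1 \<le> real n"
    using eventually_large_sample unfolding eventually_sequentially by blast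
  define C0 where "C0 = 7 * C * (1 + H) + 7 * (C * eb / 2 + 2) + 7 * sqrt (real N0)"
  define \<delta>bar where "\<delta>bar = (eb / (4 * H)) powr (1 / \<alpha>)"
  have holder_small: "H * \<delta> powr \<alpha> \<le> eb / 4" if "0 \<le> \<delta>" "\<delta> < \<delta>bar" for \<delta>
  proof -
    have "\<delta> powr \<alpha> \<le> \<delta>bar powr \<alpha>"
      using that \<alpha>_pos by (intro powr_mono2) auto
    also have "\<dots> = eb / (4 * H)"
      using eb_pos H_pos \<alpha>_pos by (simp add: \<delta>bar_def powr_powr)
    finally show ?thesis
      using H_pos by (simp add: field_simps)
  qed
  have "C0 > 0" "\<delta>bar > 0"
    using C_pos eb_pos H_pos by (simp_all add: C0_def \<delta>bar_def add_pos_nonneg)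
  then show ?thesis
    using eb_pos binder_D_bound[where \<delta>bar = \<delta>bar, OF N0 C0_def holder_small]
    by (intro exI[of _ C0] exI[of _ \<delta>bar] exI[of _ "eb / 4"]) auto
qed

end

theorem theorem3:
  fixes f0 :: "'d::euclidean_space \<Rightarrow> real"
    and lam \<alpha> :: real
  assumes lam_pos: "lam > 0"
    and nonneg: "\<And>x. f0 x \<ge> 0"
    and integrable: "integrable lborel f0"
    and density: "integral\<^sup>L lborel f0 = 1"
    and cont: "continuous_on UNIV f0"
    and vanish: "(f0 \<longlongrightarrow> 0) at_infinity"
    and margin_regular: "\<exists>C \<epsilon>bar. C > 0 \<and> \<epsilon>bar > 0 \<and>
        (\<forall>\<epsilon>. 0 < \<epsilon> \<and> \<epsilon> < \<epsilon>bar \<longrightarrow>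
           (LINT x:{x. \<bar>f0 x - lam\<bar> \<le> \<epsilon>}|lborel. f0 x) \<le> C * \<epsilon>) \<and>
        (\<forall>lam_l lam_h. lam - \<epsilon>bar \<le> lam_l \<and> lam_l < lam_h \<and> lam_h \<le> lam + \<epsilon>bar \<longrightarrow>
           (\<forall>x\<in>level_set f0 lam_h. \<forall>y\<in>level_set f0 lam_h.
              (\<not> connected_component (level_set f0 lam_h) x y
                 \<longrightarrow> \<not> connected_component (level_set f0 lam_l) x y) \<and>
              (connected_component (level_set f0 lam_l) x y
                 \<longrightarrow> connected_component (level_set f0 lam_h) x y)))"
    and alpha: "0 < \<alpha>" "\<alpha> \<le> 1"
    and holder: "holder_continuous \<alpha> f0"
  shows "\<exists>C0 \<delta>bar \<gamma>bar. C0 > 0 \<and> \<delta>bar > 0 \<and> \<gamma>bar > 0 \<and>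
    (\<forall>n::nat. \<forall>a m::real. n \<ge> 16 \<and> 0 < a \<and> a \<le> 1 \<and> 0 < m \<and> m \<le> 1 \<and> a \<le> 2 * m \<longrightarrow>
      holds_with_prob_at_least (sample_space f0 n)
        (\<lambda>X. \<forall>\<delta> \<gamma>. r_rate n lam DIM('d) (measure lborel (ball (0::'d) 1)) \<le> \<delta> \<and> \<delta> < \<delta>bar
                 \<and> 0 < \<gamma> \<and> \<gamma> < \<gamma>bar \<longrightarrow>
             (\<forall>f. (\<forall>x. \<bar>f x - f0 x\<bar> \<le> \<gamma>) \<longrightarrow>
                binder_D a m n (surrogate_clustering f lam \<delta> X n) (level_clustering f0 lam X n)
                  \<le> C0 * (max \<gamma> (\<delta> powr \<alpha>) + sqrt (ln (real n) / real n))))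
        (1 - (1 + real n) / (real n)\<^sup>2))"
proof -
  obtain H where H: "H > 0" "\<And>x y. \<bar>f0 x - f0 y\<bar> \<le> H * dist x y powr \<alpha>"
    using holder_continuous_imp_pos_constant[OF holder] by blast
  obtain R where R: "R \<ge> 0" "level_set f0 lam \<subseteq> cball 0 R"
    using level_set_bounded_of_vanishing[OF vanish lam_pos] by blast
  from margin_regular obtain C eb where C: "C > 0" and eb: "eb > 0"
    and mass: "\<forall>\<epsilon>. 0 < \<epsilon> \<and> \<epsilon> < eb \<longrightarrow> (LINT x:{x. \<bar>f0 x - lam\<bar> \<le> \<epsilon>}|lborel. f0 x) \<le> C * \<epsilon>"
    and stable: "\<forall>lam_l lam_h. lam - eb \<le> lam_l \<and> lam_l < lam_h \<and> lam_h \<le> lam + eb \<longrightarrow>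
       (\<forall>x\<in>level_set f0 lam_h. \<forall>y\<in>level_set f0 lam_h.
          (\<not> connected_component (level_set f0 lam_h) x y \<longrightarrow> \<not> connected_component (level_set f0 lam_l) x y) \<and>
          (connected_component (level_set f0 lam_l) x y \<longrightarrow> connected_component (level_set f0 lam_h) x y))"
    by blast
  interpret regular_level_density f0 lam \<alpha> H C eb R
  proof unfold_locales
    fix lam_l lam_h x y
    assume "lam - eb \<le> lam_l" "lam_l < lam_h" "lam_h \<le> lam + eb" "x \<in> level_set f0 lam_h" "y \<in> level_set f0 lam_h"
      "connected_component (level_set f0 lam_l) x y"
    then show "connected_component (level_set f0 lam_h) x y"
      using stable by blast
  qed (use nonneg integrable density lam_pos H alpha(1) C eb mass R in auto)
  show ?thesis
    by (rule uniform_clustering_bound)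
qed

end
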